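(* Let $T\subset\mathbb{R}^k$ be definable and let $f:U\subset T\times(0,1)^m\to\mathbb{R}$ be prepared in $x$ with associated bounded monomial map $b$, where for every $t\in T$ the fiber $U_t$ is open. Then there exist $A,B>0$ such that for every $t\in T$ the map $f_t=f(t,\cdot):U_t\to\mathbb{R}$ is weakly $(A,B,0)$-mild. Moreover, if the $C^1$-norm of the associated bounded monomial map $b_t=b(t,\cdot)$ is bounded independently of $t$, then there exist $A,B>0$ such that for every $\beta\in\mathbb{N}^m$ with $|\beta|\le1$ and every $t\in T$ the map $f_t^{(\beta)}$ is weakly $(A,B,0)$-mild.
   Context: Definability is in an o-minimal structure $\mathbb{R}^K_{\mathcal F}$ (ordered real field expanded by restricted functions from a Weierstrass system $\mathcal F$ and power functions $x\mapsto x^s$, $s$ in a subfield $K$ of the field of exponents of $\mathcal F$; e.g. power-subanalytic sets). A bounded definable $f:U\to\mathbb{R}$, $U\subset\mathbb{R}^k\times(0,1)^m$ with points $(t,x)$, is prepared in $x$ if $f(t,x)=b_j(t,x)F(b(t,x))$ where $b=(b_1,\dots,b_N):U\to\mathbb{R}^N$ is bounded, $b_j$ is a component of $b$, each $b_i(t,x)=a_i(t)\prod_{l=1}^m x_l^{\mu_{i,l}}$ with $a_i$ definable depending only on $t$ and $\mu_i\in K^m$, and $F$ is analytic and non-vanishing on an open neighbourhood of the closure of $b(U)$; $b$ is the associated bounded monomial map. For $W\subset(0,1)^d$ open, $A,B>0$, $C\ge0$: $g:W\to\mathbb{R}$ is weakly $(A,B,C)$-mild if it is $C^\infty$ and $|g^{(\nu)}(x)|\le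 B^{C+1}A^{|\nu|}|\nu|!^{C+1}/x^\nu$ for all $x\in W$, $\nu\in\mathbb{N}^d$, where $x^\nu=\prod x_i^{\nu_i}$, $|\nu|=\sum\nu_i$, $g^{(\nu)}=\partial^{|\nu|}g/\partial x_1^{\nu_1}\cdots\partial x_d^{\nu_d}$. The $C^1$-norm of $h$ is $\sup_x\max(|h(x)|,\max_i|\partial h/\partial x_i(x)|)$ (maximum over components for vector-valued $h$). *)

theory Defs
  imports "HOL-Analysis.Analysis"
begin

definition pd :: "'d::finite \<Rightarrow> (real^'d \<Rightarrow> real) \<Rightarrow> real^'d \<Rightarrow> real" where
  "pd i g x = deriv (\<lambda>s. g (x + s *\<^sub>R axis i 1)) 0"

text \<open>Iterated partial derivative along a list of directions; the multi-index
  is nu l = count (mset is) l, and |nu| = length is.\<close>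
fun pdl :: "'d::finite list \<Rightarrow> (real^'d \<Rightarrow> real) \<Rightarrow> real^'d \<Rightarrow> real" where
  "pdl [] g = g"
| "pdl (i # is) g = pd i (pdl is g)"

definition smooth_on :: "(real^'d::finite) set \<Rightarrow> (real^'d \<Rightarrow> real) \<Rightarrow> bool" where
  "smooth_on W g \<longleftrightarrow> (\<forall>is. \<forall>x\<in>W. pdl is g differentiable (at x))"

definition weakly_mild ::
  "(real^'d::finite) set \<Rightarrow> real \<Rightarrow> real \<Rightarrow> real \<Rightarrow> (real^'d \<Rightarrow> real) \<Rightarrow> bool" where
  "weakly_mild W A B C g \<longleftrightarrow> smooth_on W g \<and>
     (\<forall>x\<in>W. \<forall>is. \<bar>pdl is g x\<bar> \<le>
        B powr (C + 1) * A ^ length is * (fact (length is)) powr (C + 1)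
        / (\<Prod>l\<in>UNIV. (x $ l) ^ count (mset is) l))"

definition real_analytic_on :: "(real^'n::finite) set \<Rightarrow> (real^'n \<Rightarrow> real) \<Rightarrow> bool" where
  "real_analytic_on V F \<longleftrightarrow> (\<forall>y\<in>V. \<exists>r>0. \<exists>c :: ('n \<Rightarrow> nat) \<Rightarrow> real.
     \<forall>z. (\<forall>i. \<bar>z $ i - y $ i\<bar> < r) \<longrightarrow>
       ((\<lambda>\<alpha>. c \<alpha> * (\<Prod>i\<in>UNIV. (z $ i - y $ i) ^ \<alpha> i)) has_sum F z) UNIV)"

definition unit_cube :: "(real^'m::finite) set" where
  "unit_cube = {x. \<forall>l. 0 < x $ l \<and> x $ l < 1}"

definition fiber :: "('a \<times> 'b) set \<Rightarrow> 'a \<Rightarrow> 'b set" where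
  "fiber U t = {x. (t, x) \<in> U}"

end

theory Submission
  imports Defs
begin

text \<open>
  Derivatives are measured in the weighted form \<open>x^\<nu> * D^\<nu> g\<close>. For a monomial \<open>a * x^\<gamma>\<close>
  this is \<open>a * x^\<gamma>\<close> times a falling factorial of \<open>\<gamma>\<close>, hence bounded by
  \<open>sup |a * x^\<gamma>| * L^|\<nu>| * |\<nu>|!\<close> with \<open>L\<close> depending only on the exponents, not on \<open>t\<close>.
  Bounds \<open>|x^\<nu> * D^\<nu> g| \<le> e * A^|\<nu>| * |\<nu>|! / (|\<nu>| + 1)^2\<close> survive products (Leibniz rule)
  at the cost of a factor 8 in \<open>e\<close>. Near a point of a fibre, \<open>F\<close> is expanded around a centre
  \<open>y\<close> close to \<open>b(t, x)\<close>, so that every term of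
  \<open>b\<^sub>j * F(b) = \<Sum>\<^sub>\<alpha> c\<^sub>\<alpha> * b\<^sub>j * \<Prod>\<^sub>i (b\<^sub>i - y\<^sub>i)^\<alpha>\<^sub>i\<close> is a product of affine functions of monomials,
  with \<open>e\<close> growing like \<open>(8 \<epsilon>)^|\<alpha>|\<close>; these bounds are summable because the expansion
  converges absolutely at radius \<open>16 \<epsilon>\<close>. Compactness of the closure of \<open>b(U)\<close> leaves finitely
  many centres, so \<open>A\<close> and \<open>B\<close> do not depend on \<open>t\<close>. One more derivative costs a relative factor
  that is controlled once the partial derivatives of the \<open>b\<^sub>i\<close>, again monomials, are bounded.
\<close>

section \<open>Partial derivatives\<close>

lemma has_real_derivative_along_axis:
  fixes g :: "real^'d::finite \<Rightarrow> real"
  assumes "(g has_derivative D) (at x)"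
  shows "((\<lambda>s. g (x + s *\<^sub>R axis i 1)) has_real_derivative D (axis i 1)) (at 0)"
proof -
  have "((\<lambda>s. x + s *\<^sub>R axis i 1) has_derivative (\<lambda>h. h *\<^sub>R axis i 1)) (at (0::real))"
    by (auto intro!: derivative_eq_intros)
  then have "((g \<circ> (\<lambda>s. x + s *\<^sub>R axis i 1)) has_derivative D \<circ> (\<lambda>h. h *\<^sub>R axis i 1)) (at 0)"
    by (rule diff_chain_at) (simp add: assms)
  moreover have "D \<circ> (\<lambda>h. h *\<^sub>R axis i 1) = (*) (D (axis i 1))"
    using linear_scale[OF has_derivative_linear[OF assms]] by (auto simp: o_def mult.commute)
  ultimately show ?thesis by (simp add: has_field_derivative_def o_def)
qed

lemma pd_eq_has_derivative:
  fixes g :: "real^'d::finite \<Rightarrow> real"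
  assumes "(g has_derivative D) (at x)"
  shows "pd i g x = D (axis i 1)"
  unfolding pd_def by (rule DERIV_imp_deriv) (rule has_real_derivative_along_axis[OF assms])

lemma has_real_derivative_pd:
  fixes g :: "real^'d::finite \<Rightarrow> real"
  assumes "g differentiable (at x)"
  shows "((\<lambda>s. g (x + s *\<^sub>R axis i 1)) has_real_derivative pd i g x) (at 0)"
proof -
  obtain D where D: "(g has_derivative D) (at x)" using assms by (auto simp: differentiable_def)
  then show ?thesis
    using has_real_derivative_along_axis[OF D] by (simp add: pd_eq_has_derivative[OF D])
qed

lemma has_derivative_pd_sum:
  fixes g :: "real^'d::finite \<Rightarrow> real"
  assumes "g differentiable (at x)"
  shows "(g has_derivative (\<lambda>h. \<Sum>j\<in>UNIV. h $ j * pd j g x)) (at x)"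
proof -
  obtain D where D: "(g has_derivative D) (at x)" using assms by (auto simp: differentiable_def)
  have "D = (\<lambda>h. \<Sum>j\<in>UNIV. h $ j * pd j g x)"
  proof
    fix h :: "real^'d"
    have "D h = D (\<Sum>j\<in>UNIV. h $ j *\<^sub>R axis j 1)"
      using basis_expansion[of h] by (simp add: scalar_mult_eq_scaleR)
    also have "\<dots> = (\<Sum>j\<in>UNIV. h $ j * D (axis j 1))"
      using has_derivative_linear[OF D] by (simp add: linear_sum linear_scale)
    finally show "D h = (\<Sum>j\<in>UNIV. h $ j * pd j g x)" by (simp add: pd_eq_has_derivative[OF D])
  qed
  with D show ?thesis by simp
qed

lemma pd_cong_open:
  fixes g h :: "real^'d::finite \<Rightarrow> real"
  assumes "open S" "x \<in> S" "\<And>y. y \<in> S \<Longrightarrow> g y = h y"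
  shows "pd i g x = pd i h x"
proof -
  have "((\<lambda>s. x + s *\<^sub>R axis i 1) \<longlongrightarrow> x) (nhds (0::real))"
    by (auto intro!: tendsto_eq_intros simp: filterlim_ident)
  then have "\<forall>\<^sub>F s in nhds 0. x + s *\<^sub>R axis i 1 \<in> S"
    using assms(1,2) by (rule topological_tendstoD)
  then have "\<forall>\<^sub>F s in nhds 0. g (x + s *\<^sub>R axis i 1) = h (x + s *\<^sub>R axis i 1)"
    by eventually_elim (rule assms(3))
  then show ?thesis unfolding pd_def by (rule deriv_cong_ev) simp
qed

lemma pdl_cong_open:
  fixes g h :: "real^'d::finite \<Rightarrow> real"
  assumes "open S" "\<And>y. y \<in> S \<Longrightarrow> g y = h y" "x \<in> S"
  shows "pdl is g x = pdl is h x"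
  using assms(3)
proof (induction "is" arbitrary: x)
  case (Cons i "is")
  then show ?case by (simp add: pd_cong_open[OF assms(1) Cons.prems Cons.IH])
qed (simp add: assms(2))

lemma differentiable_cong_open:
  fixes g h :: "real^'d::finite \<Rightarrow> real"
  assumes "open S" "x \<in> S" "\<And>y. y \<in> S \<Longrightarrow> g y = h y" "g differentiable (at x)"
  shows "h differentiable (at x)"
proof -
  obtain D where "(g has_derivative D) (at x)" using assms(4) by (auto simp: differentiable_def)
  then have "(h has_derivative D) (at x)"
    by (rule has_derivative_transform_within_open[OF _ assms(1,2)]) (rule assms(3))
  then show ?thesis by (auto simp: differentiable_def)
qed

lemma smooth_on_cong_open:
  fixes g h :: "real^'d::finite \<Rightarrow> real"
  assumes "open S" "\<And>y. y \<in> S \<Longrightarrow> g y = h y" "smooth_on S g"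
  shows "smooth_on S h"
  unfolding smooth_on_def
proof (intro allI ballI)
  fix "is" x assume x: "x \<in> S"
  have "pdl is g differentiable (at x)" using assms(3) x by (simp add: smooth_on_def)
  then show "pdl is h differentiable (at x)"
    by (rule differentiable_cong_open[OF assms(1) x, rotated]) (rule pdl_cong_open[OF assms(1,2)])
qed

lemma smooth_on_subset: "smooth_on S g \<Longrightarrow> T \<subseteq> S \<Longrightarrow> smooth_on T g"
  unfolding smooth_on_def by blast

lemma smooth_on_differentiable: "smooth_on S g \<Longrightarrow> x \<in> S \<Longrightarrow> g differentiable (at x)"
  unfolding smooth_on_def by (metis pdl.simps(1))

lemma pd_const: "pd i (\<lambda>x. c) x = 0"
  unfolding pd_def by (rule DERIV_imp_deriv) simp

lemma pd_add:
  fixes g h :: "real^'d::finite \<Rightarrow> real"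
  assumes "g differentiable (at x)" "h differentiable (at x)"
  shows "pd i (\<lambda>x. g x + h x) x = pd i g x + pd i h x"
  unfolding pd_def[of i "\<lambda>x. g x + h x"]
  by (rule DERIV_imp_deriv) (intro DERIV_add has_real_derivative_pd assms)

lemma pd_cmult:
  fixes g :: "real^'d::finite \<Rightarrow> real"
  assumes "g differentiable (at x)"
  shows "pd i (\<lambda>x. c * g x) x = c * pd i g x"
  unfolding pd_def[of i "\<lambda>x. c * g x"]
  by (rule DERIV_imp_deriv) (intro DERIV_cmult has_real_derivative_pd assms)

lemma pd_mult:
  fixes g h :: "real^'d::finite \<Rightarrow> real"
  assumes "g differentiable (at x)" "h differentiable (at x)"
  shows "pd i (\<lambda>x. g x * h x) x = pd i g x * h x + g x * pd i h x"
proof -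
  have "((\<lambda>s. g (x + s *\<^sub>R axis i 1) * h (x + s *\<^sub>R axis i 1)) has_real_derivative
      pd i g x * h (x + 0 *\<^sub>R axis i 1) + pd i h x * g (x + 0 *\<^sub>R axis i 1)) (at 0)"
    by (intro DERIV_mult has_real_derivative_pd assms)
  then show ?thesis
    unfolding pd_def[of i "\<lambda>x. g x * h x"] by (subst DERIV_imp_deriv) (auto simp: pd_def algebra_simps)
qed

lemma pd_sum:
  fixes g :: "'a \<Rightarrow> real^'d::finite \<Rightarrow> real"
  assumes "\<And>k. k \<in> I \<Longrightarrow> g k differentiable (at x)"
  shows "pd i (\<lambda>x. \<Sum>k\<in>I. g k x) x = (\<Sum>k\<in>I. pd i (g k) x)"
  unfolding pd_def[of i "\<lambda>x. \<Sum>k\<in>I. g k x"]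
  by (rule DERIV_imp_deriv) (intro DERIV_sum has_real_derivative_pd assms)

lemma pdl_const: "pdl is (\<lambda>x. c) = (\<lambda>x. if is = [] then c else 0)"
proof (induction "is")
  case (Cons i "is")
  show ?case unfolding pdl.simps Cons.IH by (simp add: fun_eq_iff pd_const)
qed simp

lemma smooth_on_const: "smooth_on S (\<lambda>x. c)"
  by (simp add: smooth_on_def pdl_const)

lemma pdl_add:
  fixes g h :: "real^'d::finite \<Rightarrow> real"
  assumes "open S" "smooth_on S g" "smooth_on S h" "x \<in> S"
  shows "pdl is (\<lambda>x. g x + h x) x = pdl is g x + pdl is h x"
  using assms(4)
proof (induction "is" arbitrary: x)
  case (Cons i "is")
  have "pdl (i # is) (\<lambda>x. g x + h x) x = pd i (\<lambda>x. pdl is g x + pdl is h x) x"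
    using pd_cong_open[OF assms(1) Cons.prems Cons.IH] by simp
  also have "\<dots> = pdl (i # is) g x + pdl (i # is) h x"
    using assms(2,3) Cons.prems by (simp add: pd_add smooth_on_def)
  finally show ?case .
qed simp

lemma pdl_cmult:
  fixes g :: "real^'d::finite \<Rightarrow> real"
  assumes "open S" "smooth_on S g" "x \<in> S"
  shows "pdl is (\<lambda>x. c * g x) x = c * pdl is g x"
  using assms(3)
proof (induction "is" arbitrary: x)
  case (Cons i "is")
  have "pdl (i # is) (\<lambda>x. c * g x) x = pd i (\<lambda>x. c * pdl is g x) x"
    using pd_cong_open[OF assms(1) Cons.prems Cons.IH] by simp
  also have "\<dots> = c * pdl (i # is) g x"
    using assms(2) Cons.prems by (simp add: pd_cmult smooth_on_def)
  finally show ?case .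
qed simp

lemma smooth_on_add:
  fixes g h :: "real^'d::finite \<Rightarrow> real"
  assumes "open S" "smooth_on S g" "smooth_on S h"
  shows "smooth_on S (\<lambda>x. g x + h x)"
  unfolding smooth_on_def
proof (intro allI ballI)
  fix "is" x assume x: "x \<in> S"
  have "(\<lambda>x. pdl is g x + pdl is h x) differentiable (at x)"
    using assms(2,3) x by (auto simp: smooth_on_def)
  then show "pdl is (\<lambda>x. g x + h x) differentiable (at x)"
    by (rule differentiable_cong_open[OF assms(1) x, rotated]) (simp add: pdl_add[OF assms])
qed

lemma smooth_on_cmult:
  fixes g :: "real^'d::finite \<Rightarrow> real"
  assumes "open S" "smooth_on S g"
  shows "smooth_on S (\<lambda>x. c * g x)"
  unfolding smooth_on_def
proof (intro allI ballI)
  fix "is" x assume x: "x \<in> S"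
  have "(\<lambda>x. c * pdl is g x) differentiable (at x)"
    using assms(2) x by (auto simp: smooth_on_def)
  then show "pdl is (\<lambda>x. c * g x) differentiable (at x)"
    by (rule differentiable_cong_open[OF assms(1) x, rotated]) (simp add: pdl_cmult[OF assms])
qed

section \<open>The Leibniz rule\<close>

fun pick :: "bool list \<Rightarrow> 'a list \<Rightarrow> 'a list" where
  "pick (b # bs) (i # is) = (if b then i # pick bs is else pick bs is)"
| "pick _ _ = []"

definition bool_lists :: "nat \<Rightarrow> bool list set" where
  "bool_lists n = {bs. length bs = n}"

lemma finite_bool_lists: "finite (bool_lists n)"
  using finite_lists_length_eq[of "UNIV :: bool set" n] by (simp add: bool_lists_def)

lemma sum_bool_lists_Suc:
  "(\<Sum>bs\<in>bool_lists (Suc n). \<phi> bs) = (\<Sum>bs\<in>bool_lists n. \<phi> (True # bs) + \<phi> (False # bs))"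
proof -
  have "bool_lists (Suc n) = Cons True ` bool_lists n \<union> Cons False ` bool_lists n"
    by (auto simp: bool_lists_def length_Suc_conv image_iff)
  also have "sum \<phi> \<dots> = sum \<phi> (Cons True ` bool_lists n) + sum \<phi> (Cons False ` bool_lists n)"
    by (rule sum.union_disjoint) (auto simp: finite_bool_lists)
  also have "\<dots> = (\<Sum>bs\<in>bool_lists n. \<phi> (True # bs)) + (\<Sum>bs\<in>bool_lists n. \<phi> (False # bs))"
    by (simp add: sum.reindex)
  finally show ?thesis by (simp add: sum.distrib)
qed

lemma length_pick:
  "length bs = length is \<Longrightarrow> length (pick bs is) = length (filter id bs)"
  by (induction bs "is" rule: pick.induct) auto

lemma length_pick_Not:
  "length bs = length is \<Longrightarrow> length (pick (map Not bs) is) = length is - length (filter id bs)"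
  by (induction bs "is" rule: pick.induct) (auto, metis Suc_diff_le length_filter_le)

lemma pdl_mult:
  fixes g h :: "real^'d::finite \<Rightarrow> real"
  assumes "open S" "smooth_on S g" "smooth_on S h" "x \<in> S"
  shows "pdl is (\<lambda>x. g x * h x) x =
    (\<Sum>bs\<in>bool_lists (length is). pdl (pick bs is) g x * pdl (pick (map Not bs) is) h x)"
  using assms(4)
proof (induction "is" arbitrary: x)
  case Nil then show ?case by (simp add: bool_lists_def)
next
  case (Cons i "is")
  note diff = smooth_on_def[THEN iffD1, rule_format, OF _ Cons.prems]
  have "pdl (i # is) (\<lambda>x. g x * h x) x =
      pd i (\<lambda>x. \<Sum>bs\<in>bool_lists (length is). pdl (pick bs is) g x * pdl (pick (map Not bs) is) h x) x"
    using pd_cong_open[OF assms(1) Cons.prems Cons.IH] by simp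
  also have "\<dots> = (\<Sum>bs\<in>bool_lists (length is).
      pd i (\<lambda>x. pdl (pick bs is) g x * pdl (pick (map Not bs) is) h x) x)"
    by (rule pd_sum) (intro differentiable_mult diff assms(2,3))
  also have "\<dots> = (\<Sum>bs\<in>bool_lists (length is).
      pd i (pdl (pick bs is) g) x * pdl (pick (map Not bs) is) h x
      + pdl (pick bs is) g x * pd i (pdl (pick (map Not bs) is) h) x)"
    by (rule sum.cong[OF refl], rule pd_mult) (simp_all add: diff assms(2,3))
  also have "\<dots> = (\<Sum>bs\<in>bool_lists (length (i # is)).
      pdl (pick bs (i # is)) g x * pdl (pick (map Not bs) (i # is)) h x)"
    unfolding length_Cons sum_bool_lists_Suc by simp
  finally show ?case .
qed

lemma smooth_on_mult:
  fixes g h :: "real^'d::finite \<Rightarrow> real"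
  assumes "open S" "smooth_on S g" "smooth_on S h"
  shows "smooth_on S (\<lambda>x. g x * h x)"
  unfolding smooth_on_def
proof (intro allI ballI)
  fix "is" x assume x: "x \<in> S"
  have d: "pdl js g differentiable (at x)" "pdl js h differentiable (at x)" for js
    using assms(2,3) x by (auto simp: smooth_on_def)
  have "(\<lambda>x. \<Sum>bs\<in>bool_lists (length is). pdl (pick bs is) g x * pdl (pick (map Not bs) is) h x)
      differentiable (at x)"
    by (simp add: d finite_bool_lists)
  then show "pdl is (\<lambda>x. g x * h x) differentiable (at x)"
    by (rule differentiable_cong_open[OF assms(1) x, rotated]) (simp add: pdl_mult[OF assms])
qed

section \<open>Majorants\<close>

lemma sum_bool_lists_binomial:
  "(\<Sum>bs\<in>bool_lists n. \<Phi> (length (filter id bs))) = (\<Sum>k\<le>n. real (n choose k) * \<Phi> k)"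
proof (induction n arbitrary: \<Phi>)
  case 0
  have "bool_lists 0 = {[]}" by (auto simp: bool_lists_def)
  then show ?case by simp
next
  case (Suc n)
  have "(\<Sum>bs\<in>bool_lists (Suc n). \<Phi> (length (filter id bs)))
      = (\<Sum>k\<le>n. real (n choose k) * \<Phi> (Suc k)) + (\<Sum>k\<le>n. real (n choose k) * \<Phi> k)"
    using Suc.IH[of "\<lambda>k. \<Phi> (Suc k)"] Suc.IH[of \<Phi>] by (simp add: sum_bool_lists_Suc sum.distrib id_def)
  also have "(\<Sum>k\<le>n. real (n choose k) * \<Phi> k) = (\<Sum>k\<le>Suc n. real (n choose k) * \<Phi> k)"
    by simp
  also have "(\<Sum>k\<le>n. real (n choose k) * \<Phi> (Suc k)) + \<dots> = (\<Sum>k\<le>Suc n. real (Suc n choose k) * \<Phi> k)"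
    by (simp only: sum.atMost_Suc_shift) (simp add: sum.distrib algebra_simps)
  finally show ?case .
qed

lemma sum_inverse_squares_le: "(\<Sum>k\<le>n. 1 / (real k + 1)\<^sup>2) \<le> 2 - 1 / (real n + 1)"
proof (induction n)
  case (Suc n)
  have "1 / (real n + 2)\<^sup>2 \<le> 1 / ((real n + 1) * (real n + 2))"
    by (intro divide_left_mono) (auto simp: power2_eq_square)
  also have "\<dots> = 1 / (real n + 1) - 1 / (real n + 2)"
    by (simp add: field_simps)
  finally show ?case using Suc by (simp add: add.commute)
qed simp

lemma sum_inverse_squares_convolution_le:
  "(\<Sum>k\<le>n. 1 / ((real k + 1)\<^sup>2 * (real (n - k) + 1)\<^sup>2)) \<le> 8 / (real n + 1)\<^sup>2"
proof -
  \<comment> \<open>\<open>1/(a b) = (1/a + 1/b)/(a + b)\<close> with \<open>a + b = n + 2\<close>, then \<open>(u + v)\<^sup>2 \<le> 2 (u\<^sup>2 + v\<^sup>2)\<close>\<close>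
  have term_le: "1 / ((real k + 1)\<^sup>2 * (real (n - k) + 1)\<^sup>2) \<le>
      2 / (real n + 2)\<^sup>2 * (1 / (real k + 1)\<^sup>2 + 1 / (real (n - k) + 1)\<^sup>2)" if "k \<le> n" for k
  proof -
    define a where "a = real k + 1"
    define b where "b = real (n - k) + 1"
    have ab: "a > 0" "b > 0" "a + b = real n + 2" using that by (auto simp: a_def b_def)
    have "1 / (a\<^sup>2 * b\<^sup>2) * (a + b)\<^sup>2 = (1/a + 1/b)\<^sup>2"
      using ab by (simp add: field_simps power2_eq_square)
    also have "\<dots> \<le> 2 * ((1/a)\<^sup>2 + (1/b)\<^sup>2)"
      using zero_le_power2[of "1/a - 1/b"] unfolding power2_eq_square by (simp add: algebra_simps)
    finally have "1 / (a\<^sup>2 * b\<^sup>2) \<le> 2 * (1/a\<^sup>2 + 1/b\<^sup>2) / (a + b)\<^sup>2"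
      using ab by (simp add: field_simps power_one_over)
    then show ?thesis using ab by (simp add: a_def b_def field_simps)
  qed
  have reflect: "(\<Sum>k\<le>n. 1 / (real (n - k) + 1)\<^sup>2) = (\<Sum>k\<le>n. 1 / (real k + 1)\<^sup>2)"
    by (rule sum.reindex_bij_witness[of _ "\<lambda>k. n - k" "\<lambda>k. n - k"]) auto
  have "(\<Sum>k\<le>n. 1 / ((real k + 1)\<^sup>2 * (real (n - k) + 1)\<^sup>2)) \<le>
      (\<Sum>k\<le>n. 2 / (real n + 2)\<^sup>2 * (1 / (real k + 1)\<^sup>2 + 1 / (real (n - k) + 1)\<^sup>2))"
    by (intro sum_mono term_le) simp
  also have "\<dots> = 2 / (real n + 2)\<^sup>2 *
      ((\<Sum>k\<le>n. 1 / (real k + 1)\<^sup>2) + (\<Sum>k\<le>n. 1 / (real (n - k) + 1)\<^sup>2))"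
    by (simp only: sum.distrib flip: sum_distrib_left)
  also have "\<dots> = 4 / (real n + 2)\<^sup>2 * (\<Sum>k\<le>n. 1 / (real k + 1)\<^sup>2)"
    by (simp only: reflect) simp
  also have "\<dots> \<le> 4 / (real n + 2)\<^sup>2 * 2"
    using sum_inverse_squares_le[of n] by (intro mult_left_mono) (auto simp: order_trans)
  also have "\<dots> \<le> 8 / (real n + 1)\<^sup>2"
    by (simp add: frac_le power_mono)
  finally show ?thesis .
qed

text \<open>The majorant sequence \<open>A\<^sup>n n!/(n+1)\<^sup>2\<close> dominates its own binomial convolution, up to the
  factor 8; this is what makes the bounds below stable under products.\<close>

definition majorant :: "real \<Rightarrow> nat \<Rightarrow> real" where
  "majorant A n = A ^ n * (fact n / (real n + 1)\<^sup>2)"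

lemma majorant_nonneg: "A \<ge> 0 \<Longrightarrow> majorant A n \<ge> 0"
  by (simp add: majorant_def)

lemma majorant_le: "A \<ge> 0 \<Longrightarrow> majorant A n \<le> A ^ n * fact n"
  unfolding majorant_def by (intro mult_left_mono) (auto simp: divide_le_eq)

lemma majorant_convolution_le:
  assumes "A \<ge> 0"
  shows "(\<Sum>k\<le>n. real (n choose k) * (majorant A k * majorant A (n - k))) \<le> 8 * majorant A n"
proof -
  have "real (n choose k) * (majorant A k * majorant A (n - k)) =
      A ^ n * fact n * (1 / ((real k + 1)\<^sup>2 * (real (n - k) + 1)\<^sup>2))" if "k \<le> n" for k
  proof -
    have "A ^ k * A ^ (n - k) = A ^ n" using that by (simp flip: power_add)
    moreover have "real (n choose k) * (fact k * fact (n - k)) = fact n"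
      using binomial_fact[OF that] by (simp add: field_simps)
    ultimately show ?thesis
      by (simp add: majorant_def field_simps)
  qed
  then have "(\<Sum>k\<le>n. real (n choose k) * (majorant A k * majorant A (n - k))) =
      A ^ n * fact n * (\<Sum>k\<le>n. 1 / ((real k + 1)\<^sup>2 * (real (n - k) + 1)\<^sup>2))"
    by (simp add: sum_distrib_left)
  also have "\<dots> \<le> A ^ n * fact n * (8 / (real n + 1)\<^sup>2)"
    using assms by (intro mult_left_mono sum_inverse_squares_convolution_le) auto
  also have "\<dots> = 8 * majorant A n"
    by (simp add: majorant_def)
  finally show ?thesis .
qed

section \<open>Functions with majorized weighted derivatives\<close>

definition xpow :: "'d::finite list \<Rightarrow> real^'d \<Rightarrow> real" where
  "xpow is x = (\<Prod>l\<in>UNIV. (x $ l) ^ count (mset is) l)"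

lemma xpow_Nil [simp]: "xpow [] x = 1"
  by (simp add: xpow_def)

lemma xpow_Cons [simp]: "xpow (i # is) x = x $ i * xpow is x"
proof -
  have "xpow (i # is) x = (\<Prod>l\<in>UNIV. (if l = i then x $ l else 1) * x $ l ^ count (mset is) l)"
    unfolding xpow_def by (rule prod.cong) auto
  then show ?thesis by (simp add: xpow_def prod.distrib prod.delta)
qed

lemma xpow_pick:
  "length bs = length is \<Longrightarrow> xpow is x = xpow (pick bs is) x * xpow (pick (map Not bs) is) x"
  by (induction bs "is" rule: pick.induct) auto

lemma xpow_ge_power:
  assumes "\<And>l. \<rho> \<le> x $ l" "0 \<le> \<rho>"
  shows "\<rho> ^ length is \<le> xpow is x"
proof (induction "is")
  case (Cons i "is")
  have "0 \<le> x $ i" using assms order_trans by blast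
  with Cons assms show ?case by (simp add: mult_mono)
qed simp

lemma xpow_pos: "(\<And>l. 0 < x $ l) \<Longrightarrow> 0 < xpow is x"
  by (induction "is") auto

definition majorized :: "(real^'d::finite) set \<Rightarrow> real \<Rightarrow> real \<Rightarrow> (real^'d \<Rightarrow> real) \<Rightarrow> bool" where
  "majorized S e A g \<longleftrightarrow> smooth_on S g \<and>
     (\<forall>x\<in>S. \<forall>is. \<bar>xpow is x * pdl is g x\<bar> \<le> e * majorant A (length is))"

lemma majorizedD:
  "majorized S e A g \<Longrightarrow> x \<in> S \<Longrightarrow> \<bar>xpow is x * pdl is g x\<bar> \<le> e * majorant A (length is)"
  by (simp add: majorized_def)

lemma majorized_smooth_on: "majorized S e A g \<Longrightarrow> smooth_on S g"
  by (simp add: majorized_def)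

lemma majorized_mono:
  fixes g :: "real^'d::finite \<Rightarrow> real"
  assumes "majorized S e A g" "e \<le> e'" "A \<ge> 0"
  shows "majorized S e' A g"
  unfolding majorized_def
proof (intro conjI ballI allI)
  fix x and "is" :: "'d list" assume "x \<in> S"
  have "e * majorant A (length is) \<le> e' * majorant A (length is)"
    using assms(2,3) by (intro mult_right_mono majorant_nonneg)
  then show "\<bar>xpow is x * pdl is g x\<bar> \<le> e' * majorant A (length is)"
    using majorizedD[OF assms(1) \<open>x \<in> S\<close>, of "is"] by linarith
qed (use assms(1) majorized_smooth_on in blast)

lemma majorized_cong_open:
  fixes g h :: "real^'d::finite \<Rightarrow> real"
  assumes "open S" "\<And>y. y \<in> S \<Longrightarrow> g y = h y" "majorized S e A g"
  shows "majorized S e A h"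
  unfolding majorized_def
proof (intro conjI ballI allI)
  show "smooth_on S h"
    by (rule smooth_on_cong_open[OF assms(1,2) majorized_smooth_on[OF assms(3)]])
  fix x and "is" :: "'d list" assume x: "x \<in> S"
  show "\<bar>xpow is x * pdl is h x\<bar> \<le> e * majorant A (length is)"
    using majorizedD[OF assms(3) x, of "is"] pdl_cong_open[OF assms(1,2) x] by simp
qed

lemma majorized_const:
  assumes "A \<ge> 0"
  shows "majorized S \<bar>c\<bar> A (\<lambda>x. c)"
  using assms by (auto simp: majorized_def smooth_on_const pdl_const majorant_def)

lemma majorized_cmult:
  fixes g :: "real^'d::finite \<Rightarrow> real"
  assumes "open S" "majorized S e A g"
  shows "majorized S (\<bar>c\<bar> * e) A (\<lambda>x. c * g x)"
  unfolding majorized_def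
proof (intro conjI ballI allI)
  show "smooth_on S (\<lambda>x. c * g x)"
    using assms by (intro smooth_on_cmult majorized_smooth_on)
  fix x and "is" :: "'d list" assume x: "x \<in> S"
  have "\<bar>xpow is x * pdl is (\<lambda>x. c * g x) x\<bar> = \<bar>c\<bar> * \<bar>xpow is x * pdl is g x\<bar>"
    using pdl_cmult[OF assms(1) majorized_smooth_on[OF assms(2)] x] by (simp add: abs_mult)
  also have "\<dots> \<le> \<bar>c\<bar> * (e * majorant A (length is))"
    by (intro mult_left_mono majorizedD[OF assms(2) x]) simp
  finally show "\<bar>xpow is x * pdl is (\<lambda>x. c * g x) x\<bar> \<le> \<bar>c\<bar> * e * majorant A (length is)"
    by (simp add: mult.assoc)
qed

lemma majorized_add:
  fixes g h :: "real^'d::finite \<Rightarrow> real"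
  assumes "open S" "majorized S e1 A g" "majorized S e2 A h"
  shows "majorized S (e1 + e2) A (\<lambda>x. g x + h x)"
  unfolding majorized_def
proof (intro conjI ballI allI)
  note smooth = majorized_smooth_on[OF assms(2)] majorized_smooth_on[OF assms(3)]
  show "smooth_on S (\<lambda>x. g x + h x)"
    using assms(1) smooth by (rule smooth_on_add)
  fix x and "is" :: "'d list" assume x: "x \<in> S"
  have "\<bar>xpow is x * pdl is (\<lambda>x. g x + h x) x\<bar> =
      \<bar>xpow is x * pdl is g x + xpow is x * pdl is h x\<bar>"
    by (simp add: pdl_add[OF assms(1) smooth x] distrib_left)
  also have "\<dots> \<le> e1 * majorant A (length is) + e2 * majorant A (length is)"
    using majorizedD[OF assms(2) x, of "is"] majorizedD[OF assms(3) x, of "is"] by linarith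
  finally show "\<bar>xpow is x * pdl is (\<lambda>x. g x + h x) x\<bar> \<le> (e1 + e2) * majorant A (length is)"
    by (simp add: distrib_right)
qed

lemma majorized_mult:
  fixes g h :: "real^'d::finite \<Rightarrow> real"
  assumes "open S" "majorized S e1 A g" "majorized S e2 A h" "e1 \<ge> 0" "e2 \<ge> 0" "A \<ge> 0"
  shows "majorized S (8 * e1 * e2) A (\<lambda>x. g x * h x)"
  unfolding majorized_def
proof (intro conjI ballI allI)
  note smooth = majorized_smooth_on[OF assms(2)] majorized_smooth_on[OF assms(3)]
  show "smooth_on S (\<lambda>x. g x * h x)"
    using assms(1) smooth by (rule smooth_on_mult)
  fix x and "is" :: "'d list" assume x: "x \<in> S"
  define n where "n = length is"
  define \<phi> where "\<phi> bs = (xpow (pick bs is) x * pdl (pick bs is) g x) *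
      (xpow (pick (map Not bs) is) x * pdl (pick (map Not bs) is) h x)" for bs
  have "xpow is x * pdl is (\<lambda>x. g x * h x) x = (\<Sum>bs\<in>bool_lists n. \<phi> bs)"
    unfolding pdl_mult[OF assms(1) smooth x] sum_distrib_left n_def \<phi>_def
    by (intro sum.cong refl) (simp add: xpow_pick[of _ "is"] bool_lists_def mult_ac)
  also have "\<bar>\<dots>\<bar> \<le> (\<Sum>bs\<in>bool_lists n.
      e1 * e2 * (majorant A (length (filter id bs)) * majorant A (n - length (filter id bs))))"
  proof (rule order_trans[OF sum_abs sum_mono])
    fix bs assume "bs \<in> bool_lists n"
    then have len: "length bs = length is" by (simp add: bool_lists_def n_def)
    have "\<bar>\<phi> bs\<bar> = \<bar>xpow (pick bs is) x * pdl (pick bs is) g x\<bar> *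
        \<bar>xpow (pick (map Not bs) is) x * pdl (pick (map Not bs) is) h x\<bar>"
      unfolding \<phi>_def by (rule abs_mult)
    also have "\<dots> \<le> (e1 * majorant A (length (filter id bs))) * (e2 * majorant A (n - length (filter id bs)))"
      using majorizedD[OF assms(2) x, of "pick bs is"] majorizedD[OF assms(3) x, of "pick (map Not bs) is"]
      by (intro mult_mono)
        (auto simp: length_pick[OF len] length_pick_Not[OF len] n_def assms(4,6) majorant_nonneg)
    finally show "\<bar>\<phi> bs\<bar> \<le> e1 * e2 * (majorant A (length (filter id bs)) * majorant A (n - length (filter id bs)))"
      by (simp add: mult_ac)
  qed
  also have "\<dots> = e1 * e2 * (\<Sum>k\<le>n. real (n choose k) * (majorant A k * majorant A (n - k)))"
    by (simp add: sum_bool_lists_binomial[where \<Phi> = "\<lambda>k. majorant A k * majorant A (n - k)"]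
        flip: sum_distrib_left)
  also have "\<dots> \<le> e1 * e2 * (8 * majorant A n)"
    using assms(4-6) by (intro mult_left_mono majorant_convolution_le) auto
  finally show "\<bar>xpow is x * pdl is (\<lambda>x. g x * h x) x\<bar> \<le> 8 * e1 * e2 * majorant A (length is)"
    by (simp add: n_def mult_ac)
qed

text \<open>\<open>\<kappa>\<close> is the relative cost of one derivative in a direction from \<open>Ls\<close>; relative costs
  add up under products.\<close>

definition majorized_with_pd ::
  "'d set \<Rightarrow> (real^'d::finite) set \<Rightarrow> real \<Rightarrow> real \<Rightarrow> real \<Rightarrow> (real^'d \<Rightarrow> real) \<Rightarrow> bool" where
  "majorized_with_pd Ls S e \<kappa> A g \<longleftrightarrow>
     majorized S e A g \<and> (\<forall>l\<in>Ls. majorized S (e * \<kappa>) A (pd l g))"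

lemma majorized_with_pd_one:
  fixes S :: "(real^'d::finite) set"
  assumes "A \<ge> 0"
  shows "majorized_with_pd Ls S 1 0 A (\<lambda>x. 1)"
proof -
  have "pd l (\<lambda>x::real^'d. 1::real) = (\<lambda>x. 0)" for l
    by (simp add: pd_const fun_eq_iff)
  then show ?thesis
    using majorized_const[OF assms, of S 1] majorized_const[OF assms, of S 0]
    by (simp add: majorized_with_pd_def)
qed

lemma majorized_with_pd_cmult:
  fixes g :: "real^'d::finite \<Rightarrow> real"
  assumes S: "open S" and g: "majorized_with_pd Ls S e \<kappa> A g"
  shows "majorized_with_pd Ls S (\<bar>c\<bar> * e) \<kappa> A (\<lambda>x. c * g x)"
  unfolding majorized_with_pd_def
proof (intro conjI ballI)
  show "majorized S (\<bar>c\<bar> * e) A (\<lambda>x. c * g x)"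
    using g by (simp add: majorized_with_pd_def majorized_cmult[OF S])
  fix l assume "l \<in> Ls"
  then have "majorized S (\<bar>c\<bar> * (e * \<kappa>)) A (\<lambda>x. c * pd l g x)"
    using g by (simp add: majorized_with_pd_def majorized_cmult[OF S])
  moreover have "smooth_on S g"
    using g by (auto simp: majorized_with_pd_def majorized_def)
  then have "c * pd l g y = pd l (\<lambda>x. c * g x) y" if "y \<in> S" for y
    using that by (simp add: pd_cmult smooth_on_differentiable)
  ultimately have "majorized S (\<bar>c\<bar> * (e * \<kappa>)) A (pd l (\<lambda>x. c * g x))"
    by (rule majorized_cong_open[OF S, rotated])
  then show "majorized S (\<bar>c\<bar> * e * \<kappa>) A (pd l (\<lambda>x. c * g x))"
    by (simp add: mult.assoc)
qed

lemma majorized_with_pd_mult: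
  fixes g h :: "real^'d::finite \<Rightarrow> real"
  assumes S: "open S"
    and g: "majorized_with_pd Ls S e1 \<kappa>1 A g" and h: "majorized_with_pd Ls S e2 \<kappa>2 A h"
    and nonneg: "e1 \<ge> 0" "e2 \<ge> 0" "\<kappa>1 \<ge> 0" "\<kappa>2 \<ge> 0" "A \<ge> 0"
  shows "majorized_with_pd Ls S (8 * e1 * e2) (\<kappa>1 + \<kappa>2) A (\<lambda>x. g x * h x)"
  unfolding majorized_with_pd_def
proof (intro conjI ballI)
  show "majorized S (8 * e1 * e2) A (\<lambda>x. g x * h x)"
    using g h nonneg by (simp add: majorized_with_pd_def majorized_mult[OF S])
  fix l assume l: "l \<in> Ls"
  have "majorized S (8 * (e1 * \<kappa>1) * e2 + 8 * e1 * (e2 * \<kappa>2)) A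
      (\<lambda>x. pd l g x * h x + g x * pd l h x)"
    using g h nonneg l
    by (intro majorized_add[OF S] majorized_mult[OF S]) (auto simp: majorized_with_pd_def)
  moreover have "smooth_on S g" "smooth_on S h"
    using g h by (auto simp: majorized_with_pd_def majorized_def)
  then have "pd l g y * h y + g y * pd l h y = pd l (\<lambda>x. g x * h x) y" if "y \<in> S" for y
    using that by (simp add: pd_mult smooth_on_differentiable)
  ultimately have "majorized S (8 * (e1 * \<kappa>1) * e2 + 8 * e1 * (e2 * \<kappa>2)) A (pd l (\<lambda>x. g x * h x))"
    by (rule majorized_cong_open[OF S, rotated])
  moreover have "8 * (e1 * \<kappa>1) * e2 + 8 * e1 * (e2 * \<kappa>2) = 8 * e1 * e2 * (\<kappa>1 + \<kappa>2)"
    by (simp add: algebra_simps)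
  ultimately show "majorized S (8 * e1 * e2 * (\<kappa>1 + \<kappa>2)) A (pd l (\<lambda>x. g x * h x))"
    by simp
qed

lemma majorized_with_pd_power:
  fixes g :: "real^'d::finite \<Rightarrow> real"
  assumes S: "open S" and g: "majorized_with_pd Ls S e \<kappa> A g" and "e \<ge> 0" "\<kappa> \<ge> 0" "A \<ge> 0"
  shows "majorized_with_pd Ls S ((8 * e) ^ k) (real k * \<kappa>) A (\<lambda>x. g x ^ k)"
proof (induction k)
  case 0
  then show ?case using majorized_with_pd_one[OF assms(5)] by simp
next
  case (Suc k)
  have "majorized_with_pd Ls S (8 * e * (8 * e) ^ k) (\<kappa> + real k * \<kappa>) A (\<lambda>x. g x * g x ^ k)"
    using assms by (intro majorized_with_pd_mult[OF S g Suc]) auto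
  then show ?case by (simp add: algebra_simps)
qed

lemma majorized_with_pd_prod:
  fixes G :: "'i \<Rightarrow> real^'d::finite \<Rightarrow> real"
  assumes S: "open S" and "finite I" "A \<ge> 0"
    and G: "\<And>i. i \<in> I \<Longrightarrow> majorized_with_pd Ls S (E i) (\<kappa> i) A (G i)"
    and nonneg: "\<And>i. i \<in> I \<Longrightarrow> E i \<ge> 0" "\<And>i. i \<in> I \<Longrightarrow> \<kappa> i \<ge> 0"
  shows "majorized_with_pd Ls S (\<Prod>i\<in>I. 8 * E i) (\<Sum>i\<in>I. \<kappa> i) A (\<lambda>x. \<Prod>i\<in>I. G i x)"
  using assms(2) G nonneg
proof (induction I rule: finite_induct)
  case empty
  then show ?case using majorized_with_pd_one[OF assms(3)] by simp
next
  case (insert j I)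
  have "majorized_with_pd Ls S (8 * E j * (\<Prod>i\<in>I. 8 * E i)) (\<kappa> j + (\<Sum>i\<in>I. \<kappa> i)) A
      (\<lambda>x. G j x * (\<Prod>i\<in>I. G i x))"
    using insert assms(3) by (intro majorized_with_pd_mult[OF S]) (auto intro: prod_nonneg sum_nonneg)
  then show ?case using insert by (simp add: mult.assoc)
qed

section \<open>Monomials with real exponents\<close>

definition pos_orthant :: "(real^'d::finite) set" where
  "pos_orthant = {x. \<forall>l. 0 < x $ l}"

lemma open_pos_orthant: "open (pos_orthant :: (real^'d::finite) set)"
proof -
  have eq: "(pos_orthant :: (real^'d) set) = (\<Inter>l\<in>UNIV. {x. 0 < x $ l})"
    by (auto simp: pos_orthant_def)
  have "open {x::real^'d. 0 < x $ l}" for l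
    by (rule open_Collect_less) (intro continuous_intros)+
  then show ?thesis
    unfolding eq by (intro open_INT) auto
qed

definition monomial :: "('d::finite \<Rightarrow> real) \<Rightarrow> real^'d \<Rightarrow> real" where
  "monomial \<gamma> x = (\<Prod>l\<in>UNIV. (x $ l) powr \<gamma> l)"

definition lower_exps :: "'d list \<Rightarrow> ('d \<Rightarrow> real) \<Rightarrow> 'd \<Rightarrow> real" where
  "lower_exps is \<gamma> l = \<gamma> l - real (count (mset is) l)"

fun falling_coef :: "'d list \<Rightarrow> ('d \<Rightarrow> real) \<Rightarrow> real" where
  "falling_coef [] \<gamma> = 1"
| "falling_coef (i # is) \<gamma> = falling_coef is \<gamma> * lower_exps is \<gamma> i"

lemma has_derivative_monomial:
  assumes "x \<in> pos_orthant"
  shows "(monomial \<gamma> has_derivative (\<lambda>h. \<Sum>l\<in>UNIV.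
      ((x $ l) powr \<gamma> l * (0 * ln (x $ l) + h $ l * \<gamma> l / x $ l)) * (\<Prod>j\<in>UNIV - {l}. (x $ j) powr \<gamma> j)))
    (at x)"
  unfolding monomial_def[abs_def]
proof (rule has_derivative_prod)
  fix l
  have "0 < x $ l" using assms by (auto simp: pos_orthant_def)
  then show "((\<lambda>x. x $ l powr \<gamma> l) has_derivative
      (\<lambda>h. (x $ l) powr \<gamma> l * (0 * ln (x $ l) + h $ l * \<gamma> l / x $ l))) (at x)"
    by (rule has_derivative_powr[OF bounded_linear_imp_has_derivative[OF bounded_linear_vec_nth]
        has_derivative_const _ UNIV_I])
qed

lemma differentiable_monomial: "x \<in> pos_orthant \<Longrightarrow> monomial \<gamma> differentiable (at x)"
  using has_derivative_monomial unfolding differentiable_def by blast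

lemma isCont_monomial: "x \<in> pos_orthant \<Longrightarrow> isCont (\<lambda>z. a * monomial \<gamma> z) x"
  by (intro continuous_intros differentiable_imp_continuous_within differentiable_monomial)

lemma pd_monomial:
  assumes "x \<in> pos_orthant"
  shows "pd i (monomial \<gamma>) x = \<gamma> i * monomial (lower_exps [i] \<gamma>) x"
proof -
  have pos: "0 < x $ l" for l using assms by (auto simp: pos_orthant_def)
  have "pd i (monomial \<gamma>) x = ((x $ i) powr \<gamma> i * (\<gamma> i / x $ i)) * (\<Prod>j\<in>UNIV - {i}. (x $ j) powr \<gamma> j)"
    by (simp add: pd_eq_has_derivative[OF has_derivative_monomial[OF assms]] sum.remove[of _ i] axis_def)
  also have "\<dots> = \<gamma> i * ((x $ i) powr (\<gamma> i - 1) * (\<Prod>j\<in>UNIV - {i}. (x $ j) powr \<gamma> j))"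
    using pos[of i] by (simp add: powr_diff field_simps)
  also have "\<dots> = \<gamma> i * monomial (lower_exps [i] \<gamma>) x"
    unfolding monomial_def lower_exps_def by (subst prod.remove[of _ i]) (auto intro!: prod.cong)
  finally show ?thesis .
qed

lemma lower_exps_Cons: "lower_exps [i] (lower_exps is \<gamma>) = lower_exps (i # is) \<gamma>"
  by (auto simp: lower_exps_def fun_eq_iff)

lemma pdl_monomial:
  "x \<in> pos_orthant \<Longrightarrow> pdl is (monomial \<gamma>) x = falling_coef is \<gamma> * monomial (lower_exps is \<gamma>) x"
proof (induction "is" arbitrary: x)
  case Nil
  have "lower_exps [] \<gamma> = \<gamma>" by (simp add: lower_exps_def fun_eq_iff)
  then show ?case by simp
next
  case (Cons i "is")
  have "pdl (i # is) (monomial \<gamma>) x = pd i (\<lambda>x. falling_coef is \<gamma> * monomial (lower_exps is \<gamma>) x) x"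
    using pd_cong_open[OF open_pos_orthant Cons.prems Cons.IH] by simp
  also have "\<dots> = falling_coef (i # is) \<gamma> * monomial (lower_exps (i # is) \<gamma>) x"
    using Cons.prems
    by (simp add: pd_cmult differentiable_monomial pd_monomial lower_exps_Cons)
  finally show ?case .
qed

lemma smooth_on_monomial:
  fixes \<gamma> :: "'d::finite \<Rightarrow> real"
  shows "smooth_on pos_orthant (monomial \<gamma>)"
  unfolding smooth_on_def
proof (intro allI ballI)
  fix "is" and x :: "real^'d" assume x: "x \<in> pos_orthant"
  have "(\<lambda>x. falling_coef is \<gamma> * monomial (lower_exps is \<gamma>) x) differentiable (at x)"
    using x by (simp add: differentiable_monomial)
  then show "pdl is (monomial \<gamma>) differentiable (at x)"
    by (rule differentiable_cong_open[OF open_pos_orthant x, rotated]) (simp add: pdl_monomial)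
qed

lemma pdl_affine:
  fixes g :: "real^'d::finite \<Rightarrow> real"
  assumes "open S" "smooth_on S g" "x \<in> S" "is \<noteq> []"
  shows "pdl is (\<lambda>x. a * g x + d) x = a * pdl is g x"
  using pdl_add[OF assms(1) smooth_on_cmult[OF assms(1,2)] smooth_on_const assms(3)]
    pdl_cmult[OF assms(1,2,3)] assms(4) by (simp add: pdl_const)

lemma xpow_mult_monomial_lower:
  assumes "x \<in> pos_orthant"
  shows "xpow is x * monomial (lower_exps is \<gamma>) x = monomial \<gamma> x"
  unfolding xpow_def monomial_def lower_exps_def prod.distrib[symmetric]
proof (rule prod.cong[OF refl])
  fix l
  have "0 < x $ l" using assms by (auto simp: pos_orthant_def)
  then show "x $ l ^ count (mset is) l * x $ l powr (\<gamma> l - real (count (mset is) l)) = x $ l powr \<gamma> l"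
    by (simp add: powr_diff powr_realpow)
qed

lemma falling_coef_le:
  assumes "\<And>l. \<bar>\<gamma> l\<bar> + 1 \<le> L"
  shows "\<bar>falling_coef is \<gamma>\<bar> \<le> L ^ length is * fact (length is)"
proof (induction "is")
  case (Cons i "is")
  have "1 \<le> L" using assms[of i] by linarith
  have "count (mset is) i \<le> length is"
    by (metis count_le_size size_mset)
  then have "\<bar>lower_exps is \<gamma> i\<bar> \<le> \<bar>\<gamma> i\<bar> + real (length is)"
    unfolding lower_exps_def by linarith
  also have "\<dots> \<le> L * (real (length is) + 1)"
  proof -
    have "real (length is) \<le> L * real (length is)"
      using \<open>1 \<le> L\<close> by (simp add: mult_le_cancel_right1)
    then show ?thesis
      using assms[of i] unfolding distrib_left by linarith
  qed
  finally have "\<bar>falling_coef (i # is) \<gamma>\<bar> \<le> (L ^ length is * fact (length is)) * (L * (real (length is) + 1))"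
    unfolding falling_coef.simps abs_mult using \<open>1 \<le> L\<close> by (intro mult_mono Cons.IH) auto
  then show ?case by (simp add: algebra_simps)
qed simp

lemma square_Suc_le_four_power: "(real n + 1)\<^sup>2 \<le> 4 ^ n"
proof (induction n)
  case (Suc n)
  show ?case
  proof (cases n)
    case (Suc m)
    have "(real (Suc n) + 1)\<^sup>2 \<le> 4 * (real n + 1)\<^sup>2"
      using Suc by (simp add: power2_eq_square algebra_simps)
    then show ?thesis using Suc.IH by simp
  qed simp
qed simp

lemma mult_max_one_le:
  fixes c :: real
  assumes "0 \<le> c" "c * max 1 r \<le> A"
  shows "c \<le> A"
proof -
  have "c * 1 \<le> c * max 1 r"
    using assms(1) by (intro mult_left_mono) auto
  then show ?thesis using assms(2) by simp
qed

lemma falling_bound_le_majorant: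
  assumes "n \<ge> 1" "L \<ge> 1" "e > 0" "R \<ge> 0" "4 * L * max 1 (R / e) \<le> A"
  shows "L ^ n * fact n * R \<le> e * majorant A n"
proof -
  define m where "m = max 1 (R / e)"
  have m: "1 \<le> m" "R / e \<le> m" by (simp_all add: m_def)
  have "R \<le> e * m"
    using m(2) assms(3) by (simp add: pos_divide_le_eq mult.commute)
  have "m \<le> m ^ n"
    using m(1) assms(1) by (simp add: self_le_power)
  have "L ^ n * R * (real n + 1)\<^sup>2 \<le> L ^ n * (e * m) * 4 ^ n"
    using assms m \<open>R \<le> e * m\<close> by (intro mult_mono square_Suc_le_four_power) auto
  also have "\<dots> \<le> e * (4 * L * m) ^ n"
    using assms m \<open>m \<le> m ^ n\<close> by (simp add: power_mult_distrib mult_ac mult_left_mono)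
  also have "\<dots> \<le> e * A ^ n"
    using assms m by (intro mult_left_mono power_mono) (auto simp: m_def)
  finally have "L ^ n * R * (real n + 1)\<^sup>2 \<le> e * A ^ n" .
  then have "L ^ n * R * (real n + 1)\<^sup>2 * (fact n / (real n + 1)\<^sup>2) \<le> e * A ^ n * (fact n / (real n + 1)\<^sup>2)"
    by (rule mult_right_mono) simp
  then show ?thesis by (simp add: majorant_def mult_ac)
qed

lemma majorized_affine_monomial:
  assumes S: "open S" "S \<subseteq> pos_orthant" and L: "\<And>l. \<bar>\<gamma> l\<bar> + 1 \<le> L" and "e > 0"
    and small: "\<And>x. x \<in> S \<Longrightarrow> \<bar>a * monomial \<gamma> x + d\<bar> \<le> e"
    and R: "\<And>x. x \<in> S \<Longrightarrow> \<bar>a * monomial \<gamma> x\<bar> \<le> R"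
    and A: "4 * L * max 1 (R / e) \<le> A"
  shows "majorized S e A (\<lambda>x. a * monomial \<gamma> x + d)"
  unfolding majorized_def
proof (intro conjI ballI allI)
  have smooth: "smooth_on S (monomial \<gamma>)"
    using smooth_on_monomial S(2) by (rule smooth_on_subset)
  then show "smooth_on S (\<lambda>x. a * monomial \<gamma> x + d)"
    using S(1) by (intro smooth_on_add smooth_on_cmult smooth_on_const)
  fix x and "is" :: "'a list" assume x: "x \<in> S"
  show "\<bar>xpow is x * pdl is (\<lambda>x. a * monomial \<gamma> x + d) x\<bar> \<le> e * majorant A (length is)"
  proof (cases "is = []")
    case True
    then show ?thesis using small[OF x] by (simp add: majorant_def)
  next
    case False
    have "L \<ge> 1" using L[of undefined] by linarith
    have "xpow is x * pdl is (\<lambda>x. a * monomial \<gamma> x + d) x = falling_coef is \<gamma> * (a * monomial \<gamma> x)"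
      using x S(2) xpow_mult_monomial_lower[of x "is" \<gamma>]
      by (auto simp: pdl_affine[OF S(1) smooth x False] pdl_monomial)
    then have "\<bar>xpow is x * pdl is (\<lambda>x. a * monomial \<gamma> x + d) x\<bar> =
        \<bar>falling_coef is \<gamma>\<bar> * \<bar>a * monomial \<gamma> x\<bar>"
      by (simp add: abs_mult)
    also have "\<dots> \<le> L ^ length is * fact (length is) * R"
      using falling_coef_le[of \<gamma> L "is"] L R[OF x] \<open>L \<ge> 1\<close> by (intro mult_mono) auto
    also have "\<dots> \<le> e * majorant A (length is)"
      using False \<open>L \<ge> 1\<close> \<open>e > 0\<close> R[OF x] A
      by (intro falling_bound_le_majorant) (auto simp: Suc_le_eq)
    finally show ?thesis .
  qed
qed

lemma majorized_with_pd_affine_monomial: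
  assumes S: "open S" "S \<subseteq> pos_orthant" and L: "\<And>l. \<bar>\<gamma> l\<bar> + 2 \<le> L" and "e > 0"
    and small: "\<And>x. x \<in> S \<Longrightarrow> \<bar>a * monomial \<gamma> x + d\<bar> \<le> e"
    and R: "\<And>x. x \<in> S \<Longrightarrow> \<bar>a * monomial \<gamma> x\<bar> \<le> R"
    and "Mx > 0" and Mx: "\<And>x l. x \<in> S \<Longrightarrow> l \<in> Ls \<Longrightarrow> \<bar>pd l (\<lambda>x. a * monomial \<gamma> x) x\<bar> \<le> Mx"
    and A: "4 * L * max 1 (R / e) \<le> A"
  shows "majorized_with_pd Ls S e (Mx / e) A (\<lambda>x. a * monomial \<gamma> x + d)"
  unfolding majorized_with_pd_def
proof (intro conjI ballI)
  have L1: "\<bar>\<gamma> l\<bar> + 1 \<le> L" for l using L[of l] by linarith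
  show "majorized S e A (\<lambda>x. a * monomial \<gamma> x + d)"
    by (rule majorized_affine_monomial[OF S L1 \<open>e > 0\<close> small R A])
  fix l assume l: "l \<in> Ls"
  have smooth: "smooth_on S (monomial \<gamma>)"
    using smooth_on_monomial S(2) by (rule smooth_on_subset)
  have pd_eq: "pd l (\<lambda>x. a * monomial \<gamma> x + d') x = (a * \<gamma> l) * monomial (lower_exps [l] \<gamma>) x + 0"
    if "x \<in> S" for x d'
    using pdl_affine[OF S(1) smooth that, of "[l]" a d'] pd_monomial[of x l \<gamma>] that S(2) by auto
  have "majorized S Mx A (\<lambda>x. (a * \<gamma> l) * monomial (lower_exps [l] \<gamma>) x + 0)"
  proof (rule majorized_affine_monomial[OF S _ \<open>Mx > 0\<close>])
    show "\<bar>lower_exps [l] \<gamma> l'\<bar> + 1 \<le> L" for l'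
      using L[of l'] by (auto simp: lower_exps_def)
    show "\<bar>a * \<gamma> l * monomial (lower_exps [l] \<gamma>) x + 0\<bar> \<le> Mx"
      and "\<bar>a * \<gamma> l * monomial (lower_exps [l] \<gamma>) x\<bar> \<le> Mx" if "x \<in> S" for x
      using Mx[OF that l] pd_eq[OF that, of 0] by simp_all
    have "4 * L \<le> A"
      using L[of l] by (intro mult_max_one_le[OF _ A]) auto
    then show "4 * L * max 1 (Mx / Mx) \<le> A"
      using \<open>Mx > 0\<close> by simp
  qed
  then have "majorized S Mx A (pd l (\<lambda>x. a * monomial \<gamma> x + d))"
    by (rule majorized_cong_open[OF S(1), rotated]) (simp add: pd_eq)
  then show "majorized S (e * (Mx / e)) A (pd l (\<lambda>x. a * monomial \<gamma> x + d))"
    using \<open>e > 0\<close> by simp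
qed

section \<open>Termwise differentiation of series\<close>

lemma suminf_tail_le:
  fixes p M :: "nat \<Rightarrow> real"
  assumes "summable M" "\<And>k. \<bar>p k\<bar> \<le> M k"
  shows "\<bar>(\<Sum>k. p k) - (\<Sum>k<n. p k)\<bar> \<le> (\<Sum>k. M (k + n))"
proof -
  have "summable (\<lambda>k. \<bar>p k\<bar>)"
    by (rule summable_comparison_test'[OF assms(1)]) (simp add: assms(2))
  then have tail: "summable (\<lambda>k. \<bar>p (k + n)\<bar>)" and "summable p"
    by (auto intro: summable_ignore_initial_segment summable_rabs_cancel)
  then have "(\<Sum>k. p k) - (\<Sum>k<n. p k) = (\<Sum>k. p (k + n))"
    using suminf_split_initial_segment[of p n] by linarith
  also have "\<bar>\<dots>\<bar> \<le> (\<Sum>k. \<bar>p (k + n)\<bar>)"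
    by (rule summable_rabs[OF tail])
  also have "\<dots> \<le> (\<Sum>k. M (k + n))"
    by (rule suminf_le[OF _ tail summable_ignore_initial_segment[OF assms(1)]]) (simp add: assms(2))
  finally show ?thesis .
qed

lemma eventually_linear_partial_sums_close:
  fixes p :: "'d::finite \<Rightarrow> nat \<Rightarrow> 'x \<Rightarrow> real"
  assumes M: "summable M" "\<And>j k y. y \<in> S \<Longrightarrow> \<bar>p j k y\<bar> \<le> M k" and e: "e > 0"
  shows "\<forall>\<^sub>F n in sequentially. \<forall>y\<in>S. \<forall>h :: real^'d.
    norm ((\<Sum>k<n. \<Sum>j\<in>UNIV. h $ j * p j k y) - (\<Sum>j\<in>UNIV. h $ j * (\<Sum>k. p j k y))) \<le> e * norm h"
proof -
  define c where "c = real CARD('d)"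
  have "c > 0" by (simp add: c_def)
  obtain N where N: "\<And>n. n \<ge> N \<Longrightarrow> norm (\<Sum>k. M (k + n)) < e / c"
    using suminf_exist_split[OF divide_pos_pos[OF e \<open>c > 0\<close>] M(1)] by blast
  show ?thesis unfolding eventually_sequentially
  proof (intro exI allI impI ballI)
    fix n y and h :: "real^'d" assume n: "N \<le> n" and y: "y \<in> S"
    have "norm ((\<Sum>k<n. \<Sum>j\<in>UNIV. h $ j * p j k y) - (\<Sum>j\<in>UNIV. h $ j * (\<Sum>k. p j k y))) =
        \<bar>\<Sum>j\<in>UNIV. h $ j * ((\<Sum>k<n. p j k y) - (\<Sum>k. p j k y))\<bar>"
      by (simp add: sum.swap[of _ "{..<_}"] sum_distrib_left right_diff_distrib sum_subtractf)
    also have "\<dots> \<le> (\<Sum>j\<in>(UNIV::'d set). norm h * (\<Sum>k. M (k + n)))"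
    proof (rule order_trans[OF sum_abs sum_mono])
      fix j
      have "\<bar>(\<Sum>k. p j k y) - (\<Sum>k<n. p j k y)\<bar> \<le> (\<Sum>k. M (k + n))"
        using M y by (intro suminf_tail_le) auto
      then show "\<bar>h $ j * ((\<Sum>k<n. p j k y) - (\<Sum>k. p j k y))\<bar> \<le> norm h * (\<Sum>k. M (k + n))"
        unfolding abs_mult
        by (intro mult_mono component_le_norm_cart) (auto simp: abs_minus_commute)
    qed
    also have "\<dots> = c * norm h * (\<Sum>k. M (k + n))"
      by (simp add: c_def)
    also have "\<dots> \<le> c * norm h * (e / c)"
      using N[OF n] \<open>c > 0\<close> by (intro mult_left_mono) auto
    also have "\<dots> = e * norm h"
      using \<open>c > 0\<close> by simp
    finally show "norm ((\<Sum>k<n. \<Sum>j\<in>UNIV. h $ j * p j k y) - (\<Sum>j\<in>UNIV. h $ j * (\<Sum>k. p j k y)))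
        \<le> e * norm h" .
  qed
qed

lemma has_derivative_suminf_pd:
  fixes T :: "nat \<Rightarrow> real^'d::finite \<Rightarrow> real"
  assumes S: "open S" "convex S"
    and diff: "\<And>k x. x \<in> S \<Longrightarrow> T k differentiable (at x)"
    and sums: "\<And>x. x \<in> S \<Longrightarrow> (\<lambda>k. T k x) sums G x"
    and M: "summable M" "\<And>j k x. x \<in> S \<Longrightarrow> \<bar>pd j (T k) x\<bar> \<le> M k"
    and x: "x \<in> S"
  shows "(G has_derivative (\<lambda>h. \<Sum>j\<in>UNIV. h $ j * (\<Sum>k. pd j (T k) x))) (at x)"
proof -
  define g' where "g' y h = (\<Sum>j\<in>UNIV. h $ j * (\<Sum>k. pd j (T k) y))" for y h
  have der: "(T k has_derivative (\<lambda>h. \<Sum>j\<in>UNIV. h $ j * pd j (T k) y)) (at y within S)"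
    if "y \<in> S" for k y
    using has_derivative_pd_sum[OF diff[OF that]] by (rule has_derivative_at_withinI)
  have unif: "\<forall>\<^sub>F n in sequentially. \<forall>y\<in>S. \<forall>h.
      norm ((\<Sum>k<n. \<Sum>j\<in>UNIV. h $ j * pd j (T k) y) - g' y h) \<le> e * norm h" if "e > 0" for e
    unfolding g'_def using M that by (rule eventually_linear_partial_sums_close)
  obtain g where g: "\<And>y. y \<in> S \<Longrightarrow> (\<lambda>n. T n y) sums g y \<and> (g has_derivative g' y) (at y within S)"
    using has_derivative_series[OF S(2) der unif x sums[OF x]] by blast
  have "(g has_derivative g' x) (at x)"
    using g[OF x] at_within_open[OF x S(1)] by simp
  then have "(G has_derivative g' x) (at x)"
    by (rule has_derivative_transform_within_open[OF _ S(1) x]) (use g sums sums_unique2 in blast)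
  then show ?thesis by (simp add: g'_def[abs_def])
qed

lemma pd_suminf:
  fixes T :: "nat \<Rightarrow> real^'d::finite \<Rightarrow> real"
  assumes "open S" "convex S"
    and "\<And>k x. x \<in> S \<Longrightarrow> T k differentiable (at x)"
    and "\<And>x. x \<in> S \<Longrightarrow> (\<lambda>k. T k x) sums G x"
    and M: "summable M" "\<And>j k x. x \<in> S \<Longrightarrow> \<bar>pd j (T k) x\<bar> \<le> M k"
    and x: "x \<in> S"
  shows "G differentiable (at x)" and "(\<lambda>k. pd i (T k) x) sums pd i G x"
proof -
  note D = has_derivative_suminf_pd[OF assms]
  then show "G differentiable (at x)" by (auto simp: differentiable_def)
  have "pd i G x = (\<Sum>j\<in>UNIV. axis i 1 $ j * (\<Sum>k. pd j (T k) x))"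
    using pd_eq_has_derivative[OF D] by simp
  also have "\<dots> = (\<Sum>j\<in>UNIV. if j = i then (\<Sum>k. pd j (T k) x) else 0)"
    by (rule sum.cong) (auto simp: axis_def)
  finally have "pd i G x = (\<Sum>k. pd i (T k) x)"
    by simp
  moreover have "summable (\<lambda>k. pd i (T k) x)"
    by (rule summable_comparison_test'[OF M(1)]) (simp add: M(2) x)
  ultimately show "(\<lambda>k. pd i (T k) x) sums pd i G x"
    by (simp add: summable_sums)
qed

lemma pdl_suminf:
  fixes T :: "nat \<Rightarrow> real^'d::finite \<Rightarrow> real"
  assumes S: "open S" "convex S" and smooth: "\<And>k. smooth_on S (T k)"
    and sums: "\<And>x. x \<in> S \<Longrightarrow> (\<lambda>k. T k x) sums G x"
    and M: "summable M" "\<And>is k x. x \<in> S \<Longrightarrow> \<bar>pdl is (T k) x\<bar> \<le> C (length is) * M k"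
    and x: "x \<in> S"
  shows "(\<lambda>k. pdl is (T k) x) sums pdl is G x" and "pdl is G differentiable (at x)"
proof -
  have step: "pdl js G differentiable (at y) \<and> (\<lambda>k. pdl (i # js) (T k) y) sums pdl (i # js) G y"
    if IH: "\<And>y. y \<in> S \<Longrightarrow> (\<lambda>k. pdl js (T k) y) sums pdl js G y" and y: "y \<in> S" for js i y
  proof -
    have diff: "pdl js (T k) differentiable (at z)" if "z \<in> S" for k z
      using smooth[of k] that by (simp add: smooth_on_def)
    have bound: "\<bar>pd j (pdl js (T k)) z\<bar> \<le> C (Suc (length js)) * M k" if "z \<in> S" for j k z
      using M(2)[OF that, of "j # js"] by simp
    note suminf = pd_suminf[OF S diff IH summable_mult[OF M(1)] bound y]
    show ?thesis
      using suminf(1) suminf(2)[of i] by simp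
  qed
  have all: "(\<lambda>k. pdl js (T k) y) sums pdl js G y" if "y \<in> S" for js y
    using that by (induction js arbitrary: y) (use sums step in auto)
  show "(\<lambda>k. pdl is (T k) x) sums pdl is G x"
    using all[OF x] .
  show "pdl is G differentiable (at x)"
    using step[OF all x] by blast
qed

context
  fixes N :: "(real^'d::finite) set" and \<rho> A :: real
    and T :: "'a::countable \<Rightarrow> real^'d \<Rightarrow> real" and E :: "'a \<Rightarrow> real" and G :: "real^'d \<Rightarrow> real"
  assumes infinite_index: "infinite (UNIV :: 'a set)"
    and N: "open N" "convex N" "\<rho> > 0" "\<And>z l. z \<in> N \<Longrightarrow> \<rho> \<le> z $ l"
    and T: "\<And>\<alpha>. majorized N (E \<alpha>) A (T \<alpha>)"
    and E: "\<And>\<alpha>. E \<alpha> \<ge> 0" "E summable_on UNIV"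
    and G: "\<And>z. z \<in> N \<Longrightarrow> ((\<lambda>\<alpha>. T \<alpha> z) has_sum G z) UNIV"
begin

lemma pdl_has_sum_majorized:
  assumes z: "z \<in> N"
  shows "((\<lambda>\<alpha>. pdl is (T \<alpha>) z) has_sum pdl is G z) UNIV" and "pdl is G differentiable (at z)"
proof -
  obtain h :: "nat \<Rightarrow> 'a" where h: "bij_betw h UNIV UNIV"
    using bij_betw_from_nat_into[OF countableI_type infinite_index] by blast
  have "((\<lambda>k. E (h k)) has_sum infsum E UNIV) UNIV"
    using has_sum_infsum[OF E(2)] has_sum_reindex_bij_betw[OF h] by blast
  then have sE: "summable (\<lambda>k. E (h k))"
    using has_sum_imp_sums sums_summable by blast
  have sums: "(\<lambda>k. T (h k) y) sums G y" if "y \<in> N" for y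
    using G[OF that] has_sum_reindex_bij_betw[OF h] has_sum_imp_sums by blast
  have bound: "\<bar>pdl js (T (h k)) y\<bar> \<le> majorant A (length js) / \<rho> ^ length js * E (h k)"
    if y: "y \<in> N" for js k y
  proof -
    have pos: "0 < \<rho> ^ length js" using N(3) by simp
    have "\<rho> ^ length js \<le> xpow js y"
      using N(3,4) y by (intro xpow_ge_power) auto
    then have "\<rho> ^ length js * \<bar>pdl js (T (h k)) y\<bar> \<le> \<bar>xpow js y * pdl js (T (h k)) y\<bar>"
      using pos by (simp add: abs_mult mult_right_mono)
    also have "\<dots> \<le> E (h k) * majorant A (length js)"
      using majorizedD[OF T y] .
    finally show ?thesis
      using pos by (simp add: pos_le_divide_eq mult_ac)
  qed
  have smooth: "smooth_on N (T (h k))" for k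
    using T majorized_smooth_on by blast
  note suminf = pdl_suminf[where T = "\<lambda>k. T (h k)" and C = "\<lambda>n. majorant A n / \<rho> ^ n",
      OF N(1,2) smooth sums sE bound z]
  show "pdl is G differentiable (at z)"
    by (rule suminf(2))
  have "summable (\<lambda>k. norm (pdl is (T (h k)) z))"
    by (rule summable_comparison_test'[OF summable_mult[OF sE, of "majorant A (length is) / \<rho> ^ length is"]])
      (simp only: real_norm_def abs_abs bound[OF z])
  then have "((\<lambda>k. pdl is (T (h k)) z) has_sum pdl is G z) UNIV"
    using suminf(1) by (rule norm_summable_imp_has_sum)
  then show "((\<lambda>\<alpha>. pdl is (T \<alpha>) z) has_sum pdl is G z) UNIV"
    using has_sum_reindex_bij_betw[OF h] by blast
qed

lemma majorized_has_sum: "majorized N (infsum E UNIV) A G"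
  unfolding majorized_def
proof (intro conjI ballI allI)
  show "smooth_on N G"
    unfolding smooth_on_def using pdl_has_sum_majorized(2) by blast
  fix z and "is" :: "'d list" assume z: "z \<in> N"
  have lhs: "((\<lambda>\<alpha>. xpow is z * pdl is (T \<alpha>) z) has_sum xpow is z * pdl is G z) UNIV"
    using pdl_has_sum_majorized(1)[OF z] by (rule has_sum_cmult_right)
  have rhs: "((\<lambda>\<alpha>. E \<alpha> * majorant A (length is)) has_sum infsum E UNIV * majorant A (length is)) UNIV"
    using has_sum_infsum[OF E(2)] by (rule has_sum_cmult_left)
  have "xpow is z * pdl is G z \<le> infsum E UNIV * majorant A (length is)"
    using majorizedD[OF T z] by (intro has_sum_mono[OF lhs rhs]) (simp add: abs_le_iff)
  moreover have "- 1 * (xpow is z * pdl is G z) \<le> infsum E UNIV * majorant A (length is)"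
    using majorizedD[OF T z] by (intro has_sum_mono[OF has_sum_cmult_right[OF lhs] rhs])
      (simp add: abs_le_iff)
  ultimately show "\<bar>xpow is z * pdl is G z\<bar> \<le> infsum E UNIV * majorant A (length is)"
    by linarith
qed

end

lemma majorized_with_pd_has_sum:
  fixes T :: "'a::countable \<Rightarrow> real^'d::finite \<Rightarrow> real"
  assumes "infinite (UNIV :: 'a set)"
    and N: "open N" "convex N" "\<rho> > 0" "\<And>z l. z \<in> N \<Longrightarrow> \<rho> \<le> z $ l"
    and T: "\<And>\<alpha>. majorized_with_pd Ls N (E \<alpha>) (\<kappa> \<alpha>) A (T \<alpha>)"
    and E: "\<And>\<alpha>. E \<alpha> \<ge> 0" "\<And>\<alpha>. \<kappa> \<alpha> \<ge> 0" "E summable_on UNIV" "(\<lambda>\<alpha>. E \<alpha> * \<kappa> \<alpha>) summable_on UNIV"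
    and G: "\<And>z. z \<in> N \<Longrightarrow> ((\<lambda>\<alpha>. T \<alpha> z) has_sum G z) UNIV"
  shows "majorized N (infsum E UNIV) A G"
    and "l \<in> Ls \<Longrightarrow> majorized N (\<Sum>\<^sub>\<infinity>\<alpha>. E \<alpha> * \<kappa> \<alpha>) A (pd l G)"
proof -
  have majorized: "\<And>\<alpha>. majorized N (E \<alpha>) A (T \<alpha>)"
    using T by (simp add: majorized_with_pd_def)
  show "majorized N (infsum E UNIV) A G"
    by (rule majorized_has_sum[OF assms(1) N majorized E(1,3) G])
  assume l: "l \<in> Ls"
  have sums: "((\<lambda>\<alpha>. pd l (T \<alpha>) z) has_sum pd l G z) UNIV" if "z \<in> N" for z
    using pdl_has_sum_majorized(1)[OF assms(1) N majorized E(1,3) G that, of "[l]"] by simp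
  have pd_majorized: "\<And>\<alpha>. majorized N (E \<alpha> * \<kappa> \<alpha>) A (pd l (T \<alpha>))"
    using T l by (simp add: majorized_with_pd_def)
  have "\<And>\<alpha>. 0 \<le> E \<alpha> * \<kappa> \<alpha>"
    using E(1,2) by simp
  from majorized_has_sum[OF assms(1) N pd_majorized this E(4) sums]
  show "majorized N (\<Sum>\<^sub>\<infinity>\<alpha>. E \<alpha> * \<kappa> \<alpha>) A (pd l G)" .
qed

section \<open>Prepared functions\<close>

text \<open>The majorant series of the expansion is required to converge at \<open>16 \<epsilon>\<close>: this absorbs
  the factor 8 of the product rule for majorants and the factor \<open>|\<alpha>| \<le> 2\<^bsup>|\<alpha>|\<^esup>\<close> lost in one
  derivative of \<open>\<Prod>\<^sub>i u\<^sub>i\<^bsup>\<alpha>\<^sub>i\<^esup>\<close>.\<close>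

definition power_series_at ::
  "(real^'n::finite \<Rightarrow> real) \<Rightarrow> real^'n \<Rightarrow> real \<Rightarrow> (('n \<Rightarrow> nat) \<Rightarrow> real) \<Rightarrow> bool" where
  "power_series_at F y \<epsilon> c \<longleftrightarrow>
     (\<forall>w. (\<forall>i. \<bar>w $ i - y $ i\<bar> \<le> \<epsilon>) \<longrightarrow>
        ((\<lambda>\<alpha>. c \<alpha> * (\<Prod>i\<in>UNIV. (w $ i - y $ i) ^ \<alpha> i)) has_sum F w) UNIV) \<and>
     (\<lambda>\<alpha>. \<bar>c \<alpha>\<bar> * (16 * \<epsilon>) ^ sum \<alpha> UNIV) summable_on UNIV"

definition series_weight :: "(('n::finite \<Rightarrow> nat) \<Rightarrow> real) \<Rightarrow> real \<Rightarrow> real" where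
  "series_weight c \<epsilon> = (\<Sum>\<^sub>\<infinity>\<alpha>. \<bar>c \<alpha>\<bar> * (16 * \<epsilon>) ^ sum \<alpha> UNIV)"

lemma series_weight_nonneg: "\<epsilon> \<ge> 0 \<Longrightarrow> series_weight c \<epsilon> \<ge> 0"
  unfolding series_weight_def by (intro infsum_nonneg) simp

lemma majorized_with_pd_power_product:
  fixes u :: "'n::finite \<Rightarrow> real^'d::finite \<Rightarrow> real"
  assumes S: "open S"
    and u: "\<And>i. majorized_with_pd Ls S \<epsilon> \<kappa> A (u i)" and v: "majorized_with_pd Ls S R \<kappa>' A v"
    and nonneg: "\<epsilon> \<ge> 0" "\<kappa> \<ge> 0" "R \<ge> 0" "\<kappa>' \<ge> 0" "A \<ge> 0"
  shows "majorized_with_pd Ls S (\<bar>c\<bar> * (8 * R * 8 ^ CARD('n) * (8 * \<epsilon>) ^ sum \<alpha> UNIV))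
    (\<kappa>' + real (sum \<alpha> UNIV) * \<kappa>) A (\<lambda>z. c * (v z * (\<Prod>i\<in>UNIV. u i z ^ \<alpha> i)))"
proof -
  have "majorized_with_pd Ls S (\<Prod>i\<in>UNIV. 8 * (8 * \<epsilon>) ^ \<alpha> i) (\<Sum>i\<in>UNIV. real (\<alpha> i) * \<kappa>) A
      (\<lambda>z. \<Prod>i\<in>UNIV. u i z ^ \<alpha> i)"
    using majorized_with_pd_power[OF S u] nonneg by (intro majorized_with_pd_prod[OF S]) auto
  then have "majorized_with_pd Ls S (8 * R * (\<Prod>i\<in>UNIV. 8 * (8 * \<epsilon>) ^ \<alpha> i))
      (\<kappa>' + (\<Sum>i\<in>UNIV. real (\<alpha> i) * \<kappa>)) A (\<lambda>z. v z * (\<Prod>i\<in>UNIV. u i z ^ \<alpha> i))"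
    using nonneg by (intro majorized_with_pd_mult[OF S v]) (auto intro: prod_nonneg sum_nonneg)
  moreover have "(\<Prod>i\<in>UNIV. 8 * (8 * \<epsilon>) ^ \<alpha> i) = 8 ^ CARD('n) * (8 * \<epsilon>) ^ sum \<alpha> UNIV"
    by (simp add: prod.distrib power_sum)
  moreover have "(\<Sum>i\<in>UNIV. real (\<alpha> i) * \<kappa>) = real (sum \<alpha> UNIV) * \<kappa>"
    by (simp add: sum_distrib_right)
  ultimately show ?thesis
    using majorized_with_pd_cmult[OF S, of Ls _ _ A _ c] by (simp add: mult.assoc)
qed

lemma power_weight_le:
  assumes "\<epsilon> > 0" "R > 0" "Mx \<ge> 0"
  shows "(8 * \<epsilon>) ^ n * (Mx / R + real n * (Mx / \<epsilon>)) \<le> Mx * (1 / R + 1 / \<epsilon>) * (16 * \<epsilon>) ^ n"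
proof -
  have "(8 * \<epsilon>) ^ n \<le> (16 * \<epsilon>) ^ n"
    using assms by (intro power_mono) auto
  moreover have "real n * (8 * \<epsilon>) ^ n \<le> (16 * \<epsilon>) ^ n"
  proof -
    have "real n * (8 * \<epsilon>) ^ n \<le> 2 ^ n * (8 * \<epsilon>) ^ n"
      using assms of_nat_less_two_power[of n] by (intro mult_right_mono) auto
    also have "\<dots> = (16 * \<epsilon>) ^ n"
      unfolding power_mult_distrib[symmetric] by simp
    finally show ?thesis .
  qed
  ultimately have "Mx / R * (8 * \<epsilon>) ^ n + Mx / \<epsilon> * (real n * (8 * \<epsilon>) ^ n)
      \<le> Mx / R * (16 * \<epsilon>) ^ n + Mx / \<epsilon> * (16 * \<epsilon>) ^ n"
    using assms by (intro add_mono mult_left_mono) auto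
  then show ?thesis
    by (simp add: algebra_simps)
qed

lemma series_term_weights_le:
  fixes c :: "('n::finite \<Rightarrow> nat) \<Rightarrow> real"
  assumes F: "power_series_at F y \<epsilon> c" "\<epsilon> > 0" and "R > 0" "Mx > 0" "K \<ge> 0"
  defines "E \<equiv> \<lambda>\<alpha>. \<bar>c \<alpha>\<bar> * (K * (8 * \<epsilon>) ^ sum \<alpha> UNIV)"
    and "\<kappa> \<equiv> \<lambda>\<alpha>. Mx / R + real (sum \<alpha> UNIV) * (Mx / \<epsilon>)"
  shows "E summable_on UNIV" "(\<lambda>\<alpha>. E \<alpha> * \<kappa> \<alpha>) summable_on UNIV"
    and "infsum E UNIV \<le> K * series_weight c \<epsilon>"
    and "(\<Sum>\<^sub>\<infinity>\<alpha>. E \<alpha> * \<kappa> \<alpha>) \<le> K * series_weight c \<epsilon> * (Mx * (1 / R + 1 / \<epsilon>))"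
proof -
  define C where "C = Mx * (1 / R + 1 / \<epsilon>)"
  define w where "w \<alpha> = \<bar>c \<alpha>\<bar> * (16 * \<epsilon>) ^ sum \<alpha> UNIV" for \<alpha> :: "'n \<Rightarrow> nat"
  have E: "0 \<le> E \<alpha>" "0 \<le> E \<alpha> * \<kappa> \<alpha>" "E \<alpha> \<le> K * w \<alpha>" "E \<alpha> * \<kappa> \<alpha> \<le> K * C * w \<alpha>" for \<alpha>
  proof -
    show "0 \<le> E \<alpha>"
      using assms by (simp add: E_def)
    moreover have "0 \<le> \<kappa> \<alpha>"
      unfolding \<kappa>_def using assms by (intro add_nonneg_nonneg mult_nonneg_nonneg) (auto intro!: sum_nonneg)
    ultimately show "0 \<le> E \<alpha> * \<kappa> \<alpha>" by simp
    show "E \<alpha> \<le> K * w \<alpha>"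
      unfolding E_def w_def using assms by (simp add: mult.left_commute mult_left_mono power_mono)
    have "E \<alpha> * \<kappa> \<alpha> = \<bar>c \<alpha>\<bar> * K *
        ((8 * \<epsilon>) ^ sum \<alpha> UNIV * (Mx / R + real (sum \<alpha> UNIV) * (Mx / \<epsilon>)))"
      by (simp add: E_def \<kappa>_def mult_ac)
    also have "\<dots> \<le> \<bar>c \<alpha>\<bar> * K * (C * (16 * \<epsilon>) ^ sum \<alpha> UNIV)"
      unfolding C_def using assms by (intro mult_left_mono power_weight_le) auto
    finally show "E \<alpha> * \<kappa> \<alpha> \<le> K * C * w \<alpha>"
      by (simp add: w_def mult_ac)
  qed
  have w: "w summable_on UNIV" "infsum w UNIV = series_weight c \<epsilon>"
    using F(1) by (simp_all add: power_series_at_def series_weight_def w_def[abs_def])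
  show summable: "E summable_on UNIV" "(\<lambda>\<alpha>. E \<alpha> * \<kappa> \<alpha>) summable_on UNIV"
    using E by (auto intro!: summable_on_comparison_test[OF summable_on_cmult_right[OF w(1)]])
  show "infsum E UNIV \<le> K * series_weight c \<epsilon>"
    using infsum_mono[OF summable(1) summable_on_cmult_right[OF w(1), of K]] E(3)
    by (simp add: infsum_cmult_right' w(2))
  have "(\<Sum>\<^sub>\<infinity>\<alpha>. E \<alpha> * \<kappa> \<alpha>) \<le> K * C * series_weight c \<epsilon>"
    using infsum_mono[OF summable(2) summable_on_cmult_right[OF w(1), of "K * C"]] E(4)
    by (simp add: infsum_cmult_right' w(2))
  then show "(\<Sum>\<^sub>\<infinity>\<alpha>. E \<alpha> * \<kappa> \<alpha>) \<le> K * series_weight c \<epsilon> * (Mx * (1 / R + 1 / \<epsilon>))"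
    by (simp add: C_def mult_ac)
qed

lemma majorized_with_pd_prepared_term:
  fixes N :: "(real^'m::finite) set" and a :: "'n::finite \<Rightarrow> real" and \<mu> :: "'n \<Rightarrow> 'm \<Rightarrow> real"
  assumes N: "open N" "N \<subseteq> pos_orthant" and "\<epsilon> > 0"
    and close: "\<And>z i. z \<in> N \<Longrightarrow> \<bar>a i * monomial (\<mu> i) z - y $ i\<bar> \<le> \<epsilon>"
    and R: "R > 0" "\<And>z i. z \<in> N \<Longrightarrow> \<bar>a i * monomial (\<mu> i) z\<bar> \<le> R"
    and Mx: "Mx > 0" "\<And>z i l. z \<in> N \<Longrightarrow> l \<in> Ls \<Longrightarrow> \<bar>pd l (\<lambda>z. a i * monomial (\<mu> i) z) z\<bar> \<le> Mx"
    and L: "\<And>i l. \<bar>\<mu> i l\<bar> + 2 \<le> L" and A: "4 * L * max 1 (R / \<epsilon>) \<le> A"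
  shows "majorized_with_pd Ls N (\<bar>c\<bar> * (8 * R * 8 ^ CARD('n) * (8 * \<epsilon>) ^ sum \<alpha> UNIV))
    (Mx / R + real (sum \<alpha> UNIV) * (Mx / \<epsilon>)) A
    (\<lambda>z. c * ((a j * monomial (\<mu> j) z + 0) * (\<Prod>i\<in>UNIV. (a i * monomial (\<mu> i) z + - y $ i) ^ \<alpha> i)))"
proof -
  have "0 \<le> 4 * L" using L[of undefined undefined] by linarith
  then have "4 * L \<le> A"
    using A by (rule mult_max_one_le)
  have u: "majorized_with_pd Ls N \<epsilon> (Mx / \<epsilon>) A (\<lambda>z. a i * monomial (\<mu> i) z + - y $ i)" for i
    by (rule majorized_with_pd_affine_monomial[OF N L \<open>\<epsilon> > 0\<close> _ R(2) Mx A]) (use close in simp)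
  have v: "majorized_with_pd Ls N R (Mx / R) A (\<lambda>z. a j * monomial (\<mu> j) z + 0)"
    by (rule majorized_with_pd_affine_monomial[OF N L R(1) _ R(2) Mx]) (use R \<open>4 * L \<le> A\<close> in simp_all)
  show ?thesis
    using \<open>\<epsilon> > 0\<close> R(1) Mx(1) \<open>0 \<le> 4 * L\<close> \<open>4 * L \<le> A\<close>
    by (intro majorized_with_pd_power_product[OF N(1) u v]) auto
qed

lemma majorized_prepared_near:
  fixes N :: "(real^'m::finite) set" and a :: "'n::finite \<Rightarrow> real" and \<mu> :: "'n \<Rightarrow> 'm \<Rightarrow> real"
    and F :: "real^'n \<Rightarrow> real" and g :: "real^'m \<Rightarrow> real"
  assumes N: "open N" "convex N" "N \<subseteq> pos_orthant" "\<rho> > 0" "\<And>z l. z \<in> N \<Longrightarrow> \<rho> \<le> z $ l"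
    and F: "power_series_at F y \<epsilon> c" "\<epsilon> > 0"
    and close: "\<And>z i. z \<in> N \<Longrightarrow> \<bar>a i * monomial (\<mu> i) z - y $ i\<bar> \<le> \<epsilon>"
    and R: "R > 0" "\<And>z i. z \<in> N \<Longrightarrow> \<bar>a i * monomial (\<mu> i) z\<bar> \<le> R"
    and g: "\<And>z. z \<in> N \<Longrightarrow> g z = a j * monomial (\<mu> j) z * F (\<chi> i. a i * monomial (\<mu> i) z)"
    and Mx: "Mx > 0" "\<And>z i l. z \<in> N \<Longrightarrow> l \<in> Ls \<Longrightarrow> \<bar>pd l (\<lambda>z. a i * monomial (\<mu> i) z) z\<bar> \<le> Mx"
    and L: "\<And>i l. \<bar>\<mu> i l\<bar> + 2 \<le> L" and A: "4 * L * max 1 (R / \<epsilon>) \<le> A"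
  shows "majorized N (8 * R * 8 ^ CARD('n) * series_weight c \<epsilon>) A g"
    and "l \<in> Ls \<Longrightarrow>
      majorized N (8 * R * 8 ^ CARD('n) * series_weight c \<epsilon> * (Mx * (1 / R + 1 / \<epsilon>))) A (pd l g)"
proof -
  define K where "K = 8 * R * 8 ^ CARD('n)"
  define T where "T \<alpha> z = c \<alpha> * ((a j * monomial (\<mu> j) z + 0) *
      (\<Prod>i\<in>UNIV. (a i * monomial (\<mu> i) z + - y $ i) ^ \<alpha> i))" for \<alpha> z
  have "K \<ge> 0" using R(1) by (simp add: K_def)
  note weights = series_term_weights_le[OF F R(1) Mx(1) this]
  have T: "majorized_with_pd Ls N (\<bar>c \<alpha>\<bar> * (K * (8 * \<epsilon>) ^ sum \<alpha> UNIV))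
      (Mx / R + real (sum \<alpha> UNIV) * (Mx / \<epsilon>)) A (T \<alpha>)" for \<alpha>
    unfolding T_def K_def by (rule majorized_with_pd_prepared_term[OF N(1,3) F(2) close R Mx L A])
  have sums: "((\<lambda>\<alpha>. T \<alpha> z) has_sum g z) UNIV" if "z \<in> N" for z
  proof -
    define b where "b = (\<chi> i. a i * monomial (\<mu> i) z)"
    have "\<forall>i. \<bar>b $ i - y $ i\<bar> \<le> \<epsilon>"
      using close[OF that] by (simp add: b_def)
    then have "((\<lambda>\<alpha>. c \<alpha> * (\<Prod>i\<in>UNIV. (b $ i - y $ i) ^ \<alpha> i)) has_sum F b) UNIV"
      using F(1) unfolding power_series_at_def by blast
    from has_sum_cmult_right[OF this, of "a j * monomial (\<mu> j) z"]
    show ?thesis using g[OF that] by (simp add: T_def b_def mult_ac)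
  qed
  have infinite: "infinite (UNIV :: ('n \<Rightarrow> nat) set)"
    using finite_fun_UNIVD2 infinite_UNIV_nat by blast
  have E: "0 \<le> \<bar>c \<alpha>\<bar> * (K * (8 * \<epsilon>) ^ sum \<alpha> UNIV)" for \<alpha>
    using \<open>K \<ge> 0\<close> F(2) by simp
  have \<kappa>: "0 \<le> Mx / R + real (sum \<alpha> UNIV) * (Mx / \<epsilon>)" for \<alpha>
    using R(1) Mx(1) F(2) by (intro add_nonneg_nonneg mult_nonneg_nonneg) (auto intro!: sum_nonneg)
  note sum_bounds = majorized_with_pd_has_sum[OF infinite N(1,2,4,5) T E \<kappa> weights(1,2) sums]
  have "0 \<le> 4 * L"
    using L[of undefined undefined] by linarith
  then have "0 \<le> A"
    using mult_max_one_le[OF _ A] by linarith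
  show "majorized N (8 * R * 8 ^ CARD('n) * series_weight c \<epsilon>) A g"
    by (rule majorized_mono[OF sum_bounds(1) weights(3) \<open>0 \<le> A\<close>, unfolded K_def]) simp_all
  show "majorized N (8 * R * 8 ^ CARD('n) * series_weight c \<epsilon> * (Mx * (1 / R + 1 / \<epsilon>))) A (pd l g)"
    if "l \<in> Ls"
    by (rule majorized_mono[OF sum_bounds(2) weights(4) \<open>0 \<le> A\<close>, unfolded K_def]) (use that in simp_all)
qed

lemma eventually_bounded_below_and_close:
  fixes f :: "'n::finite \<Rightarrow> real^'m::finite \<Rightarrow> real"
  assumes "x \<in> pos_orthant" "\<And>i. isCont (f i) x" "\<And>i. \<bar>f i x - y $ i\<bar> < \<epsilon>"
  obtains \<rho> where "\<rho> > 0" "\<forall>\<^sub>F z in nhds x. (\<forall>l. \<rho> \<le> z $ l) \<and> (\<forall>i. \<bar>f i z - y $ i\<bar> \<le> \<epsilon>)"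
proof
  define \<rho> where "\<rho> = Min (range (\<lambda>l. x $ l / 2))"
  have pos: "0 < x $ l" for l
    using assms(1) by (simp add: pos_orthant_def)
  then show "\<rho> > 0"
    unfolding \<rho>_def by (subst Min_gr_iff) auto
  have "\<forall>\<^sub>F z in nhds x. \<forall>l. \<rho> < z $ l"
  proof (rule eventually_all_finite)
    fix l
    have "\<rho> < x $ l"
      using pos[of l] Min_le[of "range (\<lambda>l. x $ l / 2)" "x $ l / 2"] by (simp add: \<rho>_def)
    moreover have "((\<lambda>z. z $ l) \<longlongrightarrow> x $ l) (nhds x)"
      by (intro tendsto_intros) (simp add: filterlim_ident)
    ultimately show "\<forall>\<^sub>F z in nhds x. \<rho> < z $ l"
      by (rule order_tendstoD(1)[rotated])
  qed
  moreover have "\<forall>\<^sub>F z in nhds x. \<forall>i. \<bar>f i z - y $ i\<bar> < \<epsilon>"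
  proof (rule eventually_all_finite)
    fix i
    have "((\<lambda>z. \<bar>f i z - y $ i\<bar>) \<longlongrightarrow> \<bar>f i x - y $ i\<bar>) (nhds x)"
      using assms(2)[of i] by (intro tendsto_intros) (simp add: isCont_def tendsto_at_iff_tendsto_nhds)
    then show "\<forall>\<^sub>F z in nhds x. \<bar>f i z - y $ i\<bar> < \<epsilon>"
      using assms(3) by (rule order_tendstoD(2))
  qed
  ultimately show "\<forall>\<^sub>F z in nhds x. (\<forall>l. \<rho> \<le> z $ l) \<and> (\<forall>i. \<bar>f i z - y $ i\<bar> \<le> \<epsilon>)"
    by eventually_elim (auto simp: less_imp_le)
qed

lemma convex_neighbourhood_bounded_below_and_close:
  fixes f :: "'n::finite \<Rightarrow> real^'m::finite \<Rightarrow> real"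
  assumes "open W" "W \<subseteq> pos_orthant" "x \<in> W" "\<And>i. isCont (f i) x" "\<And>i. \<bar>f i x - y $ i\<bar> < \<epsilon>"
  obtains N \<rho> where "open N" "convex N" "x \<in> N" "N \<subseteq> W" "\<rho> > 0" "\<And>z l. z \<in> N \<Longrightarrow> \<rho> \<le> z $ l"
    "\<And>z i. z \<in> N \<Longrightarrow> \<bar>f i z - y $ i\<bar> \<le> \<epsilon>"
proof -
  obtain \<rho> where "\<rho> > 0" and near: "\<forall>\<^sub>F z in nhds x. (\<forall>l. \<rho> \<le> z $ l) \<and> (\<forall>i. \<bar>f i z - y $ i\<bar> \<le> \<epsilon>)"
    using eventually_bounded_below_and_close[of x f y \<epsilon>] assms by blast
  have "\<forall>\<^sub>F z in nhds x. z \<in> W"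
    using assms(1,3) by (rule eventually_nhds_in_open)
  from eventually_conj[OF this near] obtain \<delta> where "\<delta> > 0"
    and ball: "\<And>z. z \<in> ball x \<delta> \<Longrightarrow> z \<in> W \<and> (\<forall>l. \<rho> \<le> z $ l) \<and> (\<forall>i. \<bar>f i z - y $ i\<bar> \<le> \<epsilon>)"
    unfolding eventually_nhds_metric by (auto simp: dist_commute)
  show ?thesis
    by (rule that[of "ball x \<delta>" \<rho>]) (use \<open>\<delta> > 0\<close> \<open>\<rho> > 0\<close> ball in auto)
qed

lemma prepared_locally_majorized:
  fixes W :: "(real^'m::finite) set" and bt :: "real^'m \<Rightarrow> real^'n::finite"
  assumes W: "open W" "W \<subseteq> pos_orthant"
    and bt: "\<And>z i. z \<in> W \<Longrightarrow> bt z $ i = a i * monomial (\<mu> i) z"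
    and R: "R > 0" "\<And>z i. z \<in> W \<Longrightarrow> \<bar>bt z $ i\<bar> \<le> R"
    and g: "\<And>z. z \<in> W \<Longrightarrow> g z = bt z $ j * F (bt z)"
    and Mx: "Mx > 0" "\<And>z i l. z \<in> W \<Longrightarrow> l \<in> Ls \<Longrightarrow> \<bar>pd l (\<lambda>z. bt z $ i) z\<bar> \<le> Mx"
    and L: "\<And>i l. \<bar>\<mu> i l\<bar> + 2 \<le> L" and A: "4 * L * max 1 (R / \<epsilon>) \<le> A"
    and F: "power_series_at F y \<epsilon> c" "\<epsilon> > 0"
    and x: "x \<in> W" "\<forall>i. \<bar>bt x $ i - y $ i\<bar> < \<epsilon>"
    and B: "8 * R * 8 ^ CARD('n) * series_weight c \<epsilon> \<le> B"
      "8 * R * 8 ^ CARD('n) * series_weight c \<epsilon> * (Mx * (1 / R + 1 / \<epsilon>)) \<le> B"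
  shows "\<exists>N. open N \<and> x \<in> N \<and> majorized N B A g \<and> (\<forall>l\<in>Ls. majorized N B A (pd l g))"
proof -
  obtain N \<rho> where N: "open N" "convex N" "x \<in> N" "N \<subseteq> W" "\<rho> > 0" "\<And>z l. z \<in> N \<Longrightarrow> \<rho> \<le> z $ l"
    and close: "\<And>z i. z \<in> N \<Longrightarrow> \<bar>a i * monomial (\<mu> i) z - y $ i\<bar> \<le> \<epsilon>"
    by (rule convex_neighbourhood_bounded_below_and_close[OF W x(1)])
      (use x(2) isCont_monomial[OF subsetD[OF W(2) x(1)]] bt[OF x(1)] in auto)
  have in_W: "z \<in> W" if "z \<in> N" for z
    using N(4) that by blast
  have pos: "N \<subseteq> pos_orthant"
    using N(4) W(2) by blast
  have R': "\<bar>a i * monomial (\<mu> i) z\<bar> \<le> R" if "z \<in> N" for z i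
    using R(2)[OF in_W[OF that]] bt[OF in_W[OF that]] by simp
  have g': "g z = a j * monomial (\<mu> j) z * F (\<chi> i. a i * monomial (\<mu> i) z)" if "z \<in> N" for z
  proof -
    have "bt z = (\<chi> i. a i * monomial (\<mu> i) z)"
      using bt[OF in_W[OF that]] by (simp add: vec_eq_iff)
    then show ?thesis using g[OF in_W[OF that]] by simp
  qed
  have Mx': "\<bar>pd l (\<lambda>z. a i * monomial (\<mu> i) z) z\<bar> \<le> Mx" if "z \<in> N" "l \<in> Ls" for z i l
  proof -
    have "pd l (\<lambda>z. a i * monomial (\<mu> i) z) z = pd l (\<lambda>z. bt z $ i) z"
      using bt by (intro pd_cong_open[OF W(1) in_W[OF that(1)]]) simp
    then show ?thesis using Mx(2)[OF in_W[OF that(1)] that(2)] by simp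
  qed
  note near = majorized_prepared_near[OF N(1,2) pos N(5,6) F close R(1) R' g' Mx(1) Mx' L A]
  have "0 \<le> 4 * L"
    using L[of undefined undefined] by linarith
  then have "0 \<le> A"
    using mult_max_one_le[OF _ A] by linarith
  have "majorized N B A g"
    by (rule majorized_mono[OF near(1) B(1) \<open>0 \<le> A\<close>])
  moreover have "majorized N B A (pd l g)" if "l \<in> Ls" for l
    using majorized_mono[OF near(2) B(2) \<open>0 \<le> A\<close>] that by blast
  ultimately show ?thesis
    using N(1,3) by blast
qed

lemma real_analytic_on_power_series_at:
  fixes F :: "real^'n::finite \<Rightarrow> real"
  assumes "real_analytic_on V F" "y \<in> V"
  obtains \<epsilon> c where "\<epsilon> > 0" "power_series_at F y \<epsilon> c"
proof -
  obtain r and c :: "('n \<Rightarrow> nat) \<Rightarrow> real" where "r > 0" and c: "\<And>z. (\<forall>i. \<bar>z $ i - y $ i\<bar> < r) \<Longrightarrow>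
      ((\<lambda>\<alpha>. c \<alpha> * (\<Prod>i\<in>UNIV. (z $ i - y $ i) ^ \<alpha> i)) has_sum F z) UNIV"
    using assms unfolding real_analytic_on_def by blast
  define \<epsilon> where "\<epsilon> = r / 32"
  have "\<epsilon> > 0" "\<epsilon> < r" "16 * \<epsilon> < r"
    using \<open>r > 0\<close> by (simp_all add: \<epsilon>_def)
  have "power_series_at F y \<epsilon> c"
    unfolding power_series_at_def
  proof
    show "\<forall>w. (\<forall>i. \<bar>w $ i - y $ i\<bar> \<le> \<epsilon>) \<longrightarrow>
        ((\<lambda>\<alpha>. c \<alpha> * (\<Prod>i\<in>UNIV. (w $ i - y $ i) ^ \<alpha> i)) has_sum F w) UNIV"
      using c \<open>\<epsilon> < r\<close> by (meson le_less_trans)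
    define z where "z = y + (\<chi> i. 16 * \<epsilon>)"
    have "\<forall>i. \<bar>z $ i - y $ i\<bar> < r"
      using \<open>16 * \<epsilon> < r\<close> \<open>\<epsilon> > 0\<close> by (simp add: z_def)
    then have "((\<lambda>\<alpha>. c \<alpha> * (\<Prod>i\<in>UNIV. (z $ i - y $ i) ^ \<alpha> i)) has_sum F z) UNIV"
      by (rule c)
    moreover have "(\<lambda>\<alpha>. c \<alpha> * (\<Prod>i\<in>UNIV. (z $ i - y $ i) ^ \<alpha> i)) = (\<lambda>\<alpha>. c \<alpha> * (16 * \<epsilon>) ^ sum \<alpha> UNIV)"
      by (simp add: z_def power_sum)
    ultimately have "((\<lambda>\<alpha>. c \<alpha> * (16 * \<epsilon>) ^ sum \<alpha> UNIV) has_sum F z) UNIV"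
      by simp
    then have "(\<lambda>\<alpha>. norm (c \<alpha> * (16 * \<epsilon>) ^ sum \<alpha> UNIV)) summable_on UNIV"
      by (intro summable_on_iff_abs_summable_on_real[THEN iffD1] has_sum_imp_summable)
    moreover have "(\<lambda>\<alpha>. norm (c \<alpha> * (16 * \<epsilon>) ^ sum \<alpha> UNIV)) = (\<lambda>\<alpha>. \<bar>c \<alpha>\<bar> * (16 * \<epsilon>) ^ sum \<alpha> UNIV)"
      using \<open>\<epsilon> > 0\<close> by (simp add: abs_mult)
    ultimately show "(\<lambda>\<alpha>. \<bar>c \<alpha>\<bar> * (16 * \<epsilon>) ^ sum \<alpha> UNIV) summable_on UNIV"
      by simp
  qed
  with \<open>\<epsilon> > 0\<close> show ?thesis by (rule that)
qed

lemma open_cube_cart: "open {w :: real^'n::finite. \<forall>i. \<bar>w $ i - y $ i\<bar> < r}"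
proof -
  have "{w :: real^'n. \<forall>i. \<bar>w $ i - y $ i\<bar> < r} = (\<Inter>i\<in>UNIV. {w. \<bar>w $ i - y $ i\<bar> < r})"
    by auto
  moreover have "open {w :: real^'n. \<bar>w $ i - y $ i\<bar> < r}" for i
    by (rule open_Collect_less) (intro continuous_intros)+
  ultimately show ?thesis by (auto intro: open_INT)
qed

lemma compact_power_series_cover:
  fixes F :: "real^'n::finite \<Rightarrow> real"
  assumes "compact K" "K \<subseteq> V" "real_analytic_on V F"
  obtains \<epsilon>0 S where "\<epsilon>0 > 0" "S > 0"
    "\<And>w. w \<in> K \<Longrightarrow> \<exists>y \<epsilon> c. \<epsilon>0 \<le> \<epsilon> \<and> (\<forall>i. \<bar>w $ i - y $ i\<bar> < \<epsilon>) \<and>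
        power_series_at F y \<epsilon> c \<and> series_weight c \<epsilon> \<le> S"
proof -
  have "\<forall>y\<in>V. \<exists>p. fst p > 0 \<and> power_series_at F y (fst p) (snd p)"
  proof
    fix y assume "y \<in> V"
    then obtain \<epsilon> c where "\<epsilon> > 0" "power_series_at F y \<epsilon> c"
      by (rule real_analytic_on_power_series_at[OF assms(3)])
    then show "\<exists>p. fst p > 0 \<and> power_series_at F y (fst p) (snd p)"
      by (intro exI[of _ "(\<epsilon>, c)"]) simp
  qed
  then obtain p where p: "\<forall>y\<in>V. fst (p y) > 0 \<and> power_series_at F y (fst (p y)) (snd (p y))"
    by (rule bchoice[THEN exE]) blast
  define \<epsilon> where "\<epsilon> y = fst (p y)" for y
  define c where "c y = snd (p y)" for y
  have \<epsilon>: "\<epsilon> y > 0 \<and> power_series_at F y (\<epsilon> y) (c y)" if "y \<in> V" for y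
    using p that by (simp add: \<epsilon>_def c_def)
  define box where "box y = {w :: real^'n. \<forall>i. \<bar>w $ i - y $ i\<bar> < \<epsilon> y}" for y
  have "open (box y)" for y
    unfolding box_def by (rule open_cube_cart)
  moreover have "K \<subseteq> (\<Union>y\<in>K. box y)"
    using assms(2) \<epsilon> by (force simp: box_def)
  ultimately obtain Y where Y: "Y \<subseteq> K" "finite Y" "K \<subseteq> (\<Union>y\<in>Y. box y)"
    by (rule compactE_image[OF assms(1)])
  have YV: "y \<in> V" if "y \<in> Y" for y
    using Y(1) assms(2) that by blast
  define \<epsilon>0 where "\<epsilon>0 = Min (insert 1 (\<epsilon> ` Y))"
  define S where "S = 1 + (\<Sum>y\<in>Y. series_weight (c y) (\<epsilon> y))"
  have weight: "0 \<le> series_weight (c y) (\<epsilon> y)" if "y \<in> Y" for y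
    using \<epsilon>[OF YV[OF that]] by (simp add: series_weight_nonneg)
  show ?thesis
  proof
    show "\<epsilon>0 > 0"
      using Y(2) \<epsilon> YV by (auto simp: \<epsilon>0_def)
    show "S > 0"
      using weight by (simp add: S_def add_pos_nonneg sum_nonneg)
    fix w assume "w \<in> K"
    then obtain y where y: "y \<in> Y" "w \<in> box y" using Y(3) by blast
    have "\<epsilon>0 \<le> \<epsilon> y"
      unfolding \<epsilon>0_def using Y(2) y(1) by (intro Min_le) auto
    moreover have "series_weight (c y) (\<epsilon> y) \<le> (\<Sum>y\<in>Y. series_weight (c y) (\<epsilon> y))"
      using Y(2) y(1) weight by (intro member_le_sum) auto
    then have "series_weight (c y) (\<epsilon> y) \<le> S"
      by (simp add: S_def)
    ultimately show "\<exists>y \<epsilon>' c'. \<epsilon>0 \<le> \<epsilon>' \<and> (\<forall>i. \<bar>w $ i - y $ i\<bar> < \<epsilon>') \<and>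
        power_series_at F y \<epsilon>' c' \<and> series_weight c' \<epsilon>' \<le> S"
      using y \<epsilon>[OF YV[OF y(1)]] by (auto simp: box_def)
  qed
qed

lemma weakly_mild_if_locally_majorized:
  fixes g :: "real^'m::finite \<Rightarrow> real"
  assumes "W \<subseteq> pos_orthant" "B > 0" "A \<ge> 0"
    and local: "\<And>x. x \<in> W \<Longrightarrow> \<exists>N. open N \<and> x \<in> N \<and> majorized N B A g"
  shows "weakly_mild W A B 0 g"
  unfolding weakly_mild_def smooth_on_def
proof (intro conjI allI ballI)
  fix "is" and x assume x: "x \<in> W"
  obtain N where N: "open N" "x \<in> N" "majorized N B A g"
    using local[OF x] by blast
  show "pdl is g differentiable (at x)"
    using N(2,3) by (auto simp: majorized_def smooth_on_def)
  have pos: "0 < xpow is x"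
    using assms(1) x by (intro xpow_pos) (auto simp: pos_orthant_def)
  have "xpow is x * \<bar>pdl is g x\<bar> \<le> B * majorant A (length is)"
    using majorizedD[OF N(3,2), of "is"] pos by (simp add: abs_mult)
  also have "\<dots> \<le> B * (A ^ length is * fact (length is))"
    using assms(2,3) by (intro mult_left_mono majorant_le) auto
  finally show "\<bar>pdl is g x\<bar> \<le> B powr (0 + 1) * A ^ length is * fact (length is) powr (0 + 1) /
      (\<Prod>l\<in>UNIV. x $ l ^ count (mset is) l)"
    using pos assms(2) by (simp add: xpow_def pos_le_divide_eq mult_ac)
qed

lemma weakly_mild_pdl_if_locally_majorized:
  fixes g :: "real^'m::finite \<Rightarrow> real"
  assumes "W \<subseteq> pos_orthant" "B > 0" "A \<ge> 0"
    and local: "\<And>x. x \<in> W \<Longrightarrow>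
      \<exists>N. open N \<and> x \<in> N \<and> majorized N B A g \<and> (\<forall>l\<in>Ls. majorized N B A (pd l g))"
    and \<beta>: "length \<beta> \<le> 1" "set \<beta> \<subseteq> Ls"
  shows "weakly_mild W A B 0 (pdl \<beta> g)"
proof (cases \<beta>)
  case Nil
  then show ?thesis
    using local by (auto intro!: weakly_mild_if_locally_majorized[OF assms(1-3)])
next
  case (Cons l rest)
  then have "\<beta> = [l]" "l \<in> Ls" using \<beta> by auto
  then show ?thesis
    using local by (auto intro!: weakly_mild_if_locally_majorized[OF assms(1-3)])
qed

lemma ex_abs_add_le:
  fixes \<mu> :: "'a::finite \<Rightarrow> 'b::finite \<Rightarrow> real"
  shows "\<exists>L. \<forall>i l. \<bar>\<mu> i l\<bar> + c \<le> L"
proof (intro exI allI)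
  fix i l
  have "\<bar>\<mu> i l\<bar> \<le> (\<Sum>l\<in>UNIV. \<bar>\<mu> i l\<bar>)"
    by (rule member_le_sum) auto
  also have "\<dots> \<le> (\<Sum>i\<in>UNIV. \<Sum>l\<in>UNIV. \<bar>\<mu> i l\<bar>)"
    by (rule member_le_sum) (auto intro: sum_nonneg)
  finally show "\<bar>\<mu> i l\<bar> + c \<le> (\<Sum>i\<in>UNIV. \<Sum>l\<in>UNIV. \<bar>\<mu> i l\<bar>) + c"
    by simp
qed

lemma prepared_family_weakly_mild:
  fixes W :: "'t \<Rightarrow> (real^'m::finite) set" and bt :: "'t \<Rightarrow> real^'m \<Rightarrow> real^'n::finite"
    and a :: "'n \<Rightarrow> 't \<Rightarrow> real" and \<mu> :: "'n \<Rightarrow> 'm \<Rightarrow> real" and g :: "'t \<Rightarrow> real^'m \<Rightarrow> real"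
  assumes W: "\<And>t. t \<in> T \<Longrightarrow> open (W t)" "\<And>t. t \<in> T \<Longrightarrow> W t \<subseteq> pos_orthant"
    and bt: "\<And>t z i. t \<in> T \<Longrightarrow> z \<in> W t \<Longrightarrow> bt t z $ i = a i t * monomial (\<mu> i) z"
    and image: "bounded Bs" "\<And>t z. t \<in> T \<Longrightarrow> z \<in> W t \<Longrightarrow> bt t z \<in> Bs" "closure Bs \<subseteq> V"
    and F: "real_analytic_on V F"
    and g: "\<And>t z. t \<in> T \<Longrightarrow> z \<in> W t \<Longrightarrow> g t z = bt t z $ j * F (bt t z)"
    and M: "\<And>t z i l. t \<in> T \<Longrightarrow> z \<in> W t \<Longrightarrow> l \<in> Ls \<Longrightarrow> \<bar>pd l (\<lambda>z. bt t z $ i) z\<bar> \<le> M"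
  shows "\<exists>A>0. \<exists>B>0. \<forall>\<beta>. length \<beta> \<le> 1 \<and> set \<beta> \<subseteq> Ls \<longrightarrow>
    (\<forall>t\<in>T. weakly_mild (W t) A B 0 (pdl \<beta> (g t)))"
proof -
  obtain \<epsilon>0 S where "\<epsilon>0 > 0" "S > 0" and cover: "\<And>w. w \<in> closure Bs \<Longrightarrow> \<exists>y \<epsilon> c. \<epsilon>0 \<le> \<epsilon> \<and>
      (\<forall>i. \<bar>w $ i - y $ i\<bar> < \<epsilon>) \<and> power_series_at F y \<epsilon> c \<and> series_weight c \<epsilon> \<le> S"
    using compact_power_series_cover[OF _ image(3) F] image(1) by (metis compact_closure)
  obtain R where "R > 0" and R: "\<And>w. w \<in> Bs \<Longrightarrow> norm w \<le> R"
    using image(1) by (auto simp: bounded_pos)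
  obtain L where L: "\<And>i l. \<bar>\<mu> i l\<bar> + 2 \<le> L"
    using ex_abs_add_le by blast
  define Mx where "Mx = max 1 M"
  define A where "A = 4 * L * max 1 (R / \<epsilon>0)"
  define K where "K = 8 * R * 8 ^ CARD('n)"
  define B where "B = max (K * S) (K * S * (Mx * (1 / R + 1 / \<epsilon>0)))"
  have "A > 0" "Mx > 0" "K > 0" "B > 0"
    using L[of undefined undefined] \<open>R > 0\<close> \<open>S > 0\<close>
    by (simp_all add: A_def Mx_def K_def B_def less_max_iff_disj)
  have local: "\<exists>N. open N \<and> x \<in> N \<and> majorized N B A (g t) \<and> (\<forall>l\<in>Ls. majorized N B A (pd l (g t)))"
    if t: "t \<in> T" and x: "x \<in> W t" for t x
  proof -
    have "bt t x \<in> closure Bs" using image(2)[OF t x] closure_subset by blast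
    then obtain y \<epsilon> c where y: "\<forall>i. \<bar>bt t x $ i - y $ i\<bar> < \<epsilon>" "power_series_at F y \<epsilon> c"
      "\<epsilon>0 \<le> \<epsilon>" "series_weight c \<epsilon> \<le> S"
      using cover by blast
    have "\<epsilon> > 0" using \<open>\<epsilon>0 > 0\<close> y(3) by linarith
    have "0 \<le> series_weight c \<epsilon>"
      using \<open>\<epsilon> > 0\<close> by (simp add: series_weight_nonneg)
    moreover have "Mx * (1 / R + 1 / \<epsilon>) \<le> Mx * (1 / R + 1 / \<epsilon>0)"
      using \<open>Mx > 0\<close> \<open>\<epsilon>0 > 0\<close> y(3) by (intro mult_left_mono add_left_mono divide_left_mono) auto
    ultimately have "K * series_weight c \<epsilon> \<le> B" "K * series_weight c \<epsilon> * (Mx * (1 / R + 1 / \<epsilon>)) \<le> B"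
      using y(4) \<open>K > 0\<close> \<open>Mx > 0\<close> \<open>R > 0\<close> \<open>\<epsilon> > 0\<close>
      by (auto simp: B_def le_max_iff_disj intro!: mult_mono)
    moreover have "\<bar>bt t z $ i\<bar> \<le> R" if "z \<in> W t" for z i
      using R[OF image(2)[OF t that]] component_le_norm_cart order_trans by blast
    moreover have "\<bar>pd l (\<lambda>z. bt t z $ i) z\<bar> \<le> Mx" if "z \<in> W t" "l \<in> Ls" for z i l
      using M[OF t that, of i] by (simp add: Mx_def le_max_iff_disj)
    moreover have "4 * L * max 1 (R / \<epsilon>) \<le> A"
      unfolding A_def using L[of undefined undefined] \<open>R > 0\<close> \<open>\<epsilon>0 > 0\<close> y(3)
      by (intro mult_left_mono max.mono divide_left_mono) auto
    ultimately show ?thesis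
      unfolding K_def
      by (intro prepared_locally_majorized[OF W[OF t] bt[OF t] \<open>R > 0\<close> _ g[OF t] \<open>Mx > 0\<close> _ L _
          y(2) \<open>\<epsilon> > 0\<close> x y(1)]) auto
  qed
  then have "weakly_mild (W t) A B 0 (pdl \<beta> (g t))" if "length \<beta> \<le> 1" "set \<beta> \<subseteq> Ls" "t \<in> T"
    for \<beta> t
    using W(2) \<open>A > 0\<close> \<open>B > 0\<close> that
    by (intro weakly_mild_pdl_if_locally_majorized[where Ls = Ls]) auto
  then show ?thesis
    using \<open>A > 0\<close> \<open>B > 0\<close> by blast
qed

theorem mainTheorem5:
  fixes T :: "(real^'k::finite) set"
    and U :: "((real^'k) \<times> (real^'m::finite)) set"
    and f :: "(real^'k) \<times> (real^'m) \<Rightarrow> real"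
    and b :: "(real^'k) \<times> (real^'m) \<Rightarrow> real^'n::finite"
    and a :: "'n \<Rightarrow> real^'k \<Rightarrow> real"
    and \<mu> :: "'n \<Rightarrow> 'm \<Rightarrow> real"
    and j :: 'n
    and F :: "real^'n \<Rightarrow> real"
    and V :: "(real^'n) set"
  assumes U_sub: "U \<subseteq> T \<times> unit_cube"
    and b_def: "\<And>t x i. (t, x) \<in> U \<Longrightarrow> b (t, x) $ i = a i t * (\<Prod>l\<in>UNIV. (x $ l) powr (\<mu> i l))"
    and b_bdd: "bounded (b ` U)"
    and V_open: "open V"
    and V_cl: "closure (b ` U) \<subseteq> V"
    and F_an: "real_analytic_on V F"
    and F_nz: "\<And>y. y \<in> V \<Longrightarrow> F y \<noteq> 0"
    and f_prep: "\<And>t x. (t, x) \<in> U \<Longrightarrow> f (t, x) = b (t, x) $ j * F (b (t, x))"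
    and fib_open: "\<And>t. t \<in> T \<Longrightarrow> open (fiber U t)"
  shows "(\<exists>A>0. \<exists>B>0. \<forall>t\<in>T. weakly_mild (fiber U t) A B 0 (\<lambda>x. f (t, x)))
    \<and> ((\<exists>M. \<forall>t\<in>T. \<forall>x\<in>fiber U t. \<forall>i.
            \<bar>b (t, x) $ i\<bar> \<le> M \<and> (\<forall>l. \<bar>pd l (\<lambda>y. b (t, y) $ i) x\<bar> \<le> M))
       \<longrightarrow> (\<exists>A>0. \<exists>B>0. \<forall>\<beta>::'m list. length \<beta> \<le> 1 \<longrightarrow>
              (\<forall>t\<in>T. weakly_mild (fiber U t) A B 0 (pdl \<beta> (\<lambda>x. f (t, x))))))"
proof -
  have fibers: "fiber U t \<subseteq> pos_orthant"
    "z \<in> fiber U t \<Longrightarrow> b (t, z) $ i = a i t * monomial (\<mu> i) z"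
    "z \<in> fiber U t \<Longrightarrow> b (t, z) \<in> b ` U"
    "z \<in> fiber U t \<Longrightarrow> f (t, z) = b (t, z) $ j * F (b (t, z))" for t z i
    using U_sub b_def f_prep by (auto simp: fiber_def unit_cube_def pos_orthant_def monomial_def)
  have family: "\<exists>A>0. \<exists>B>0. \<forall>\<beta>. length \<beta> \<le> 1 \<and> set \<beta> \<subseteq> Ls \<longrightarrow>
      (\<forall>t\<in>T. weakly_mild (fiber U t) A B 0 (pdl \<beta> (\<lambda>x. f (t, x))))"
    if "\<And>t z i l. t \<in> T \<Longrightarrow> z \<in> fiber U t \<Longrightarrow> l \<in> Ls \<Longrightarrow> \<bar>pd l (\<lambda>y. b (t, y) $ i) z\<bar> \<le> M"
    for Ls M
    by (rule prepared_family_weakly_mild[where W = "fiber U" and bt = "\<lambda>t z. b (t, z)"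
          and g = "\<lambda>t z. f (t, z)", OF fib_open _ _ b_bdd _ V_cl F_an])
      (use fibers that in auto)
  have "\<exists>A>0. \<exists>B>0. \<forall>\<beta>. length \<beta> \<le> 1 \<and> set \<beta> \<subseteq> {} \<longrightarrow>
      (\<forall>t\<in>T. weakly_mild (fiber U t) A B 0 (pdl \<beta> (\<lambda>x. f (t, x))))"
    by (rule family) simp
  then have "\<exists>A>0. \<exists>B>0. \<forall>t\<in>T. weakly_mild (fiber U t) A B 0 (pdl [] (\<lambda>x. f (t, x)))"
    by (metis empty_subsetI list.set(1) list.size(3) zero_le_one)
  moreover have "\<exists>A>0. \<exists>B>0. \<forall>\<beta>. length \<beta> \<le> 1 \<and> set \<beta> \<subseteq> UNIV \<longrightarrow>
      (\<forall>t\<in>T. weakly_mild (fiber U t) A B 0 (pdl \<beta> (\<lambda>x. f (t, x))))"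
    if "\<forall>t\<in>T. \<forall>x\<in>fiber U t. \<forall>i. \<bar>b (t, x) $ i\<bar> \<le> M \<and> (\<forall>l. \<bar>pd l (\<lambda>y. b (t, y) $ i) x\<bar> \<le> M)"
    for M
    by (rule family) (use that in blast)
  ultimately show ?thesis by auto
qed

end
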